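(* Let $\lambda_2$ be the second smallest eigenvalue of the Laplacian of $G$. For every state $x$ and every round $k\ge 0$, \[ \mathbb{E}\big[\Psi_0(X^k)-\Psi_0(X^{k+1}) \,\big|\, X^k=x\big] \;\ge\; \frac{\lambda_2}{16\Delta}\cdot\frac{1}{s_{\max}^2}\cdot \Psi_0(x) \;-\; \frac{n}{4 s_{\max}}. \]
   Context: $G=(V,E)$ is an undirected graph on $n$ vertices (processors) with maximum degree $\Delta$; $\deg(i)$ is the degree and $d_{ij}=\max\{\deg(i),\deg(j)\}$. Its Laplacian $L$ has $L_{ii}=\deg(i)$, $L_{ij}=-1$ if $\{i,j\}\in E$, $0$ otherwise. Processor $i$ has speed $s_i>0$, scaled so the smallest speed is $1$; $s_{\max}=\max_i s_i$, $\mathcal{S}=\sum_i s_i$. There are $m$ unit tasks; in state $x$, $w_i(x)$ is the number of tasks on $i$ and $\ell_i(x)=w_i(x)/s_i$. $\Psi_0(x)=\sum_i (w_i(x)-m s_i/\mathcal{S})^2/s_i$. Protocol with $\alpha=4s_{\max}$: in each round every task, independently, with $i$ its current processor, chooses a uniformly random neighbor $j$; if $\ell_i-\ell_j>1/s_j$ it moves to $j$ with probability $\frac{\deg(i)}{d_{ij}}\cdot\frac{\ell_i-\ell_j}{\alpha(1/s_i+1/s_j)w_i}$, otherwise stays. $X^k$ denotes the state after $k$ rounds. *)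

theory Defs
  imports "Jordan_Normal_Form.Char_Poly" "HOL-Probability.Probability_Mass_Function"
begin

(* Graph on vertices {0..<n}, adjacency relation E (assumed symmetric, irreflexive). *)
definition nbrs :: "nat \<Rightarrow> (nat \<Rightarrow> nat \<Rightarrow> bool) \<Rightarrow> nat \<Rightarrow> nat set" where
  "nbrs n E i = {j. j < n \<and> E i j}"

definition deg :: "nat \<Rightarrow> (nat \<Rightarrow> nat \<Rightarrow> bool) \<Rightarrow> nat \<Rightarrow> nat" where
  "deg n E i = card (nbrs n E i)"

definition max_deg :: "nat \<Rightarrow> (nat \<Rightarrow> nat \<Rightarrow> bool) \<Rightarrow> nat" where
  "max_deg n E = Max (deg n E ` {0..<n})"

definition laplacian :: "nat \<Rightarrow> (nat \<Rightarrow> nat \<Rightarrow> bool) \<Rightarrow> real Matrix.mat" where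
  "laplacian n E = Matrix.mat n n (\<lambda>(i,j). if i = j then real (deg n E i)
                                      else if E i j then -1 else 0)"

(* eigenvalues of L, with multiplicity, in increasing order
   (L is real symmetric, so its characteristic polynomial splits over the reals) *)
definition lap_eigenvalues :: "nat \<Rightarrow> (nat \<Rightarrow> nat \<Rightarrow> bool) \<Rightarrow> real list" where
  "lap_eigenvalues n E = sorted_list_of_multiset (proots (char_poly (laplacian n E)))"

definition lambda2 :: "nat \<Rightarrow> (nat \<Rightarrow> nat \<Rightarrow> bool) \<Rightarrow> real" where
  "lambda2 n E = lap_eigenvalues n E ! 1"

definition smax :: "nat \<Rightarrow> (nat \<Rightarrow> real) \<Rightarrow> real" where
  "smax n s = Max (s ` {0..<n})"

definition Stot :: "nat \<Rightarrow> (nat \<Rightarrow> real) \<Rightarrow> real" where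
  "Stot n s = (\<Sum>i<n. s i)"

(* A state is the load vector w :: nat \<Rightarrow> nat (w i = number of tasks on processor i). *)
definition load :: "(nat \<Rightarrow> real) \<Rightarrow> (nat \<Rightarrow> nat) \<Rightarrow> nat \<Rightarrow> real" where
  "load s w i = real (w i) / s i"

(* Potential Psi_0, m = total number of tasks *)
definition Psi0 :: "nat \<Rightarrow> (nat \<Rightarrow> real) \<Rightarrow> nat \<Rightarrow> (nat \<Rightarrow> nat) \<Rightarrow> real" where
  "Psi0 n s m w = (\<Sum>i<n. (real (w i) - real m * s i / Stot n s)\<^sup>2 / s i)"

definition move_prob :: "nat \<Rightarrow> (nat \<Rightarrow> nat \<Rightarrow> bool) \<Rightarrow> (nat \<Rightarrow> real) \<Rightarrow> (nat \<Rightarrow> nat)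
                         \<Rightarrow> nat \<Rightarrow> nat \<Rightarrow> real" where
  "move_prob n E s w i j =
     (let \<alpha> = 4 * smax n s;
          dij = real (max (deg n E i) (deg n E j))
      in if load s w i - load s w j > 1 / s j
         then real (deg n E i) / dij * (load s w i - load s w j)
                / (\<alpha> * (1 / s i + 1 / s j) * real (w i))
         else 0)"

definition task_step :: "nat \<Rightarrow> (nat \<Rightarrow> nat \<Rightarrow> bool) \<Rightarrow> (nat \<Rightarrow> real) \<Rightarrow> (nat \<Rightarrow> nat)
                         \<Rightarrow> nat \<Rightarrow> nat pmf" where
  "task_step n E s w i =
     (if nbrs n E i = {} then return_pmf i
      else do { j \<leftarrow> pmf_of_set (nbrs n E i);
                b \<leftarrow> bernoulli_pmf (move_prob n E s w i j);
                return_pmf (if b then j else i) })"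

fun sample_all :: "(nat \<Rightarrow> nat pmf) \<Rightarrow> nat list \<Rightarrow> nat list pmf" where
  "sample_all f [] = return_pmf []"
| "sample_all f (a # as) = do { b \<leftarrow> f a; bs \<leftarrow> sample_all f as; return_pmf (b # bs) }"

definition task_origins :: "nat \<Rightarrow> (nat \<Rightarrow> nat) \<Rightarrow> nat list" where
  "task_origins n w = concat (map (\<lambda>i. replicate (w i) i) [0..<n])"

definition round_step :: "nat \<Rightarrow> (nat \<Rightarrow> nat \<Rightarrow> bool) \<Rightarrow> (nat \<Rightarrow> real) \<Rightarrow> (nat \<Rightarrow> nat)
                          \<Rightarrow> (nat \<Rightarrow> nat) pmf" where
  "round_step n E s w =
     map_pmf (\<lambda>ds j. count_list ds j) (sample_all (task_step n E s w) (task_origins n w))"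

end

theory Submission
  imports Defs "HOL-Analysis.Analysis"
begin

text \<open>
  The number of tasks that end up on processor \<open>j\<close> is a sum of independent Bernoulli variables,
  so the expectation of \<open>\<Psi>\<^sub>0\<close> after a round is computed exactly from the means and variances
  of these counts. Writing the means through the expected flows \<open>\<phi>\<^sub>j\<^sub>k\<close> along the edges, the
  expected drop of \<open>\<Psi>\<^sub>0\<close> is at least a sum over ordered edges of terms
  \<open>\<phi>\<^sub>j\<^sub>k (2 (\<ell>\<^sub>j - \<ell>\<^sub>k) - \<phi>\<^sub>j\<^sub>k (deg j / s\<^sub>j + deg k / s\<^sub>k) - (1/s\<^sub>j + 1/s\<^sub>k)))\<close>,
  and the damping factor \<open>\<alpha> = 4 s\<^sub>m\<^sub>a\<^sub>x\<close> makes each of them at least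
  \<open>(\<ell>\<^sub>j - \<ell>\<^sub>k)\<^sub>+\<^sup>2 / (16 \<Delta> s\<^sub>m\<^sub>a\<^sub>x)\<close> up to an additive \<open>1/(10 s\<^sub>m\<^sub>a\<^sub>x d\<^sub>j\<^sub>k)\<close>.
  The resulting sum of squared load differences over the edges is the Laplacian quadratic
  form of the load vector \<open>\<ell>\<close>; since \<open>\<ell>\<close> minus its mean is orthogonal to the kernel vector
  \<open>\<one>\<close>, the spectral theorem bounds it below by \<open>\<lambda>\<^sub>2\<close> times the variance of \<open>\<ell>\<close>, and
  \<open>\<Psi>\<^sub>0 \<le> s\<^sub>m\<^sub>a\<^sub>x\<close> times that variance.
\<close>

section \<open>Expectations over finite distributions\<close>

lemma expectation_add_finite:
  fixes f g :: "'a \<Rightarrow> real"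
  assumes "finite (set_pmf M)"
  shows "measure_pmf.expectation M (\<lambda>x. f x + g x)
       = measure_pmf.expectation M f + measure_pmf.expectation M g"
  using assms by (intro Bochner_Integration.integral_add) (auto simp: integrable_measure_pmf_finite)

lemma expectation_indicator_pmf:
  "measure_pmf.expectation M (\<lambda>b. if b = j then 1 else (0::real)) = pmf M j"
  by (subst integral_measure_pmf[of "{j}"]) (auto split: if_splits)

lemma expectation_bind_pmf_finite:
  fixes h :: "'b \<Rightarrow> real"
  assumes M: "finite (set_pmf M)" and N: "\<And>x. x \<in> set_pmf M \<Longrightarrow> finite (set_pmf (N x))"
  shows "measure_pmf.expectation (bind_pmf M N) h
       = measure_pmf.expectation M (\<lambda>x. measure_pmf.expectation (N x) h)"
proof -
  define B where "B = (\<Union>x\<in>set_pmf M. set_pmf (N x))"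
  have B: "finite B" using M N by (auto simp: B_def)
  have expectation_N: "measure_pmf.expectation (N x) h = (\<Sum>y\<in>B. pmf (N x) y * h y)"
    if "x \<in> set_pmf M" for x
    by (subst integral_measure_pmf[OF B]) (use that in \<open>auto simp: B_def\<close>)
  have "measure_pmf.expectation (bind_pmf M N) h = (\<Sum>y\<in>B. pmf (bind_pmf M N) y * h y)"
    by (subst integral_measure_pmf[OF B]) (auto simp: B_def)
  also have "\<dots> = (\<Sum>y\<in>B. \<Sum>x\<in>set_pmf M. pmf M x * pmf (N x) y * h y)"
    unfolding pmf_bind by (subst integral_measure_pmf[OF M]) (auto simp: sum_distrib_right)
  also have "\<dots> = (\<Sum>x\<in>set_pmf M. pmf M x * (\<Sum>y\<in>B. pmf (N x) y * h y))"
    by (subst sum.swap) (simp add: sum_distrib_left mult.assoc)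
  also have "\<dots> = (\<Sum>x\<in>set_pmf M. pmf M x * measure_pmf.expectation (N x) h)"
    by (intro sum.cong) (simp_all add: expectation_N)
  also have "\<dots> = measure_pmf.expectation M (\<lambda>x. measure_pmf.expectation (N x) h)"
    by (subst integral_measure_pmf[OF M]) auto
  finally show ?thesis .
qed

lemma finite_set_pmf_sample_all:
  assumes "\<And>a. a \<in> set as \<Longrightarrow> finite (set_pmf (f a))"
  shows "finite (set_pmf (sample_all f as))"
  using assms by (induction as) auto

lemma expectation_count_sample_all:
  assumes fin: "\<And>a. a \<in> set as \<Longrightarrow> finite (set_pmf (f a))"
  shows "measure_pmf.expectation (sample_all f as) (\<lambda>ds. real (count_list ds j))
       = (\<Sum>a\<leftarrow>as. pmf (f a) j)"
  using fin
proof (induction as)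
  case (Cons a as)
  have fa: "finite (set_pmf (f a))" and fs: "finite (set_pmf (sample_all f as))"
    using Cons by (auto intro: finite_set_pmf_sample_all)
  have "measure_pmf.expectation (sample_all f (a # as)) (\<lambda>ds. real (count_list ds j))
      = measure_pmf.expectation (f a) (\<lambda>b. measure_pmf.expectation (sample_all f as)
          (\<lambda>bs. (if b = j then 1 else 0) + real (count_list bs j)))"
    by (simp add: expectation_bind_pmf_finite fa fs, intro Bochner_Integration.integral_cong) auto
  also have "\<dots> = measure_pmf.expectation (f a)
                    (\<lambda>b. (if b = j then 1 else 0) + (\<Sum>a\<leftarrow>as. pmf (f a) j))"
    by (simp add: expectation_add_finite fs Cons)
  finally show ?case by (simp add: expectation_add_finite fa expectation_indicator_pmf)
qed simp

lemma second_moment_count_sample_all: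
  assumes fin: "\<And>a. a \<in> set as \<Longrightarrow> finite (set_pmf (f a))"
  shows "measure_pmf.expectation (sample_all f as) (\<lambda>ds. (real (count_list ds j))\<^sup>2)
       = (\<Sum>a\<leftarrow>as. pmf (f a) j)\<^sup>2 + (\<Sum>a\<leftarrow>as. pmf (f a) j * (1 - pmf (f a) j))"
  using fin
proof (induction as)
  case (Cons a as)
  have fa: "finite (set_pmf (f a))" and fs: "finite (set_pmf (sample_all f as))"
    using Cons by (auto intro: finite_set_pmf_sample_all)
  let ?\<mu> = "\<Sum>a\<leftarrow>as. pmf (f a) j"
  let ?V = "\<Sum>a\<leftarrow>as. pmf (f a) j * (1 - pmf (f a) j)"
  let ?p = "pmf (f a) j"
  have mean: "measure_pmf.expectation (sample_all f as) (\<lambda>ds. real (count_list ds j)) = ?\<mu>"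
    using Cons by (intro expectation_count_sample_all) auto
  have "measure_pmf.expectation (sample_all f (a # as)) (\<lambda>ds. (real (count_list ds j))\<^sup>2)
      = measure_pmf.expectation (f a) (\<lambda>b. measure_pmf.expectation (sample_all f as)
          (\<lambda>bs. (if b = j then 1 else 0) + (2 * (if b = j then 1 else 0)) * real (count_list bs j)
                 + (real (count_list bs j))\<^sup>2))"
    by (simp add: expectation_bind_pmf_finite fa fs, intro Bochner_Integration.integral_cong)
       (auto simp: power2_eq_square algebra_simps)
  also have "\<dots> = measure_pmf.expectation (f a)
      (\<lambda>b. (if b = j then 1 else 0) + (2 * (if b = j then 1 else 0)) * ?\<mu> + (?\<mu>\<^sup>2 + ?V))"
    using Cons mean by (simp add: expectation_add_finite fs)
  also have "\<dots> = ?p + 2 * ?p * ?\<mu> + (?\<mu>\<^sup>2 + ?V)"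
    by (simp add: expectation_add_finite fa expectation_indicator_pmf)
  finally show ?case by (simp add: power2_eq_square algebra_simps)
qed simp

lemma expectation_sq_dev_count_sample_all:
  assumes fin: "\<And>a. a \<in> set as \<Longrightarrow> finite (set_pmf (f a))"
  shows "measure_pmf.expectation (sample_all f as) (\<lambda>ds. (real (count_list ds j) - c)\<^sup>2 / s)
       = (((\<Sum>a\<leftarrow>as. pmf (f a) j) - c)\<^sup>2 + (\<Sum>a\<leftarrow>as. pmf (f a) j * (1 - pmf (f a) j))) / s"
proof -
  have fs: "finite (set_pmf (sample_all f as))" using fin by (rule finite_set_pmf_sample_all)
  have "measure_pmf.expectation (sample_all f as) (\<lambda>ds. (real (count_list ds j) - c)\<^sup>2 / s)
    = measure_pmf.expectation (sample_all f as) (\<lambda>ds. (1/s) * (real (count_list ds j))\<^sup>2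
        + ((- 2 * c / s) * real (count_list ds j) + c\<^sup>2 / s))"
    by (intro Bochner_Integration.integral_cong refl) (cases "s = 0"; simp add: power2_eq_square field_simps)
  also have "\<dots> = (1/s) * measure_pmf.expectation (sample_all f as) (\<lambda>ds. (real (count_list ds j))\<^sup>2)
      + ((- 2 * c / s) * measure_pmf.expectation (sample_all f as) (\<lambda>ds. real (count_list ds j))
         + c\<^sup>2 / s)"
    by (subst expectation_add_finite[OF fs], subst expectation_add_finite[OF fs]) simp
  also have "\<dots> = (((\<Sum>a\<leftarrow>as. pmf (f a) j) - c)\<^sup>2
                   + (\<Sum>a\<leftarrow>as. pmf (f a) j * (1 - pmf (f a) j))) / s"
    using expectation_count_sample_all[OF fin] second_moment_count_sample_all[OF fin]
    by (cases "s = 0"; simp add: power2_eq_square field_simps)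
  finally show ?thesis .
qed

section \<open>The spectral theorem for symmetric matrices given as functions\<close>

text \<open>
  Vectors of \<open>\<real>\<^sup>n\<close> are functions \<open>nat \<Rightarrow> real\<close> of which only the first \<open>n\<close> values matter,
  and an \<open>n \<times> n\<close> matrix is a function \<open>nat \<Rightarrow> nat \<Rightarrow> real\<close>.
\<close>

definition dot :: "nat \<Rightarrow> (nat \<Rightarrow> real) \<Rightarrow> (nat \<Rightarrow> real) \<Rightarrow> real" where
  "dot n x y = (\<Sum>i<n. x i * y i)"

definition mat_vec :: "nat \<Rightarrow> (nat \<Rightarrow> nat \<Rightarrow> real) \<Rightarrow> (nat \<Rightarrow> real) \<Rightarrow> nat \<Rightarrow> real" where
  "mat_vec n a x i = (if i < n then (\<Sum>j<n. a i j * x j) else 0)"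

definition vanishes_from :: "nat \<Rightarrow> (nat \<Rightarrow> real) \<Rightarrow> bool" where
  "vanishes_from n x = (\<forall>i\<ge>n. x i = 0)"

definition orthonormal :: "nat \<Rightarrow> nat \<Rightarrow> (nat \<Rightarrow> nat \<Rightarrow> real) \<Rightarrow> bool" where
  "orthonormal n k u = (\<forall>l<k. \<forall>l'<k. dot n (u l) (u l') = (if l = l' then 1 else 0))"

lemma dot_commute: "dot n x y = dot n y x"
  unfolding dot_def by (simp add: mult.commute)

lemma dot_add_left: "dot n (\<lambda>i. x i + y i) z = dot n x z + dot n y z"
  unfolding dot_def by (simp add: algebra_simps sum.distrib)

lemma dot_add_right: "dot n z (\<lambda>i. x i + y i) = dot n z x + dot n z y"
  using dot_add_left dot_commute by metis

lemma dot_scale_left: "dot n (\<lambda>i. c * x i) z = c * dot n x z"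
  unfolding dot_def by (simp add: algebra_simps sum_distrib_left)

lemma dot_scale_right: "dot n z (\<lambda>i. c * x i) = c * dot n z x"
  using dot_scale_left dot_commute by metis

lemma dot_self_nonneg: "dot n x x \<ge> 0"
  unfolding dot_def by (intro sum_nonneg) auto

lemma dot_self_eq_0_imp: "dot n x x = 0 \<Longrightarrow> i < n \<Longrightarrow> x i = 0"
  unfolding dot_def by (subst (asm) sum_nonneg_eq_0_iff) auto

lemma mat_vec_add: "mat_vec n a (\<lambda>i. x i + y i) = (\<lambda>i. mat_vec n a x i + mat_vec n a y i)"
  unfolding mat_vec_def by (auto simp: algebra_simps sum.distrib)

lemma mat_vec_scale: "mat_vec n a (\<lambda>i. c * x i) = (\<lambda>i. c * mat_vec n a x i)"
  unfolding mat_vec_def by (auto simp: algebra_simps sum_distrib_left)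

lemma dot_mat_vec_symmetric:
  assumes sym: "\<And>i j. i < n \<Longrightarrow> j < n \<Longrightarrow> a i j = a j i"
  shows "dot n (mat_vec n a x) y = dot n x (mat_vec n a y)"
proof -
  have "dot n (mat_vec n a x) y = (\<Sum>i<n. \<Sum>j<n. a i j * x j * y i)"
    unfolding dot_def mat_vec_def by (simp add: sum_distrib_right)
  also have "\<dots> = (\<Sum>j<n. \<Sum>i<n. a i j * x j * y i)" by (rule sum.swap)
  also have "\<dots> = dot n x (mat_vec n a y)"
    unfolding dot_def mat_vec_def
    by (auto simp: sum_distrib_left sym algebra_simps intro!: sum.cong)
  finally show ?thesis .
qed

lemma exists_unit_orthogonal:
  assumes kn: "k < n" and on: "orthonormal n k u"
  shows "\<exists>v. vanishes_from n v \<and> dot n v v = 1 \<and> (\<forall>l<k. dot n v (u l) = 0)"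
proof -
  define p where "p j = (\<lambda>i. if i < n then (if i = j then 1 else 0) - (\<Sum>l<k. u l j * u l i) else 0)"
    for j
  have p_orthogonal: "dot n (p j) (u m) = 0" if "j < n" "m < k" for j m
  proof -
    have "dot n (p j) (u m) = (\<Sum>i<n. ((if i = j then 1 else 0) - (\<Sum>l<k. u l j * u l i)) * u m i)"
      unfolding dot_def p_def by (intro sum.cong) auto
    also have "\<dots> = (\<Sum>i<n. (if i = j then u m i else 0)) - (\<Sum>i<n. (\<Sum>l<k. u l j * u l i) * u m i)"
      by (subst sum_subtractf[symmetric], intro sum.cong) (auto simp: left_diff_distrib)
    also have "(\<Sum>i<n. (if i = j then u m i else 0)) = u m j" using that by simp
    also have "(\<Sum>i<n. (\<Sum>l<k. u l j * u l i) * u m i) = (\<Sum>l<k. u l j * dot n (u l) (u m))"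
      unfolding dot_def
      by (simp add: sum_distrib_right sum_distrib_left mult.assoc sum.swap[of _ "{..<n}"])
    also have "\<dots> = (\<Sum>l<k. if l = m then u l j else 0)"
      using on that unfolding orthonormal_def by (intro sum.cong) auto
    finally show ?thesis using that by simp
  qed
  text \<open>The \<open>p j\<close> span the orthogonal complement, which is nonzero because \<open>k < n\<close>.\<close>
  have "\<exists>j<n. dot n (p j) (p j) \<noteq> 0"
  proof (rule ccontr)
    assume "\<not> ?thesis"
    then have "p j i = 0" if "j < n" "i < n" for i j using dot_self_eq_0_imp that by blast
    then have "(\<Sum>l<k. u l j * u l j) = 1" if "j < n" for j
      using that unfolding p_def by force
    then have "real n = (\<Sum>j<n. \<Sum>l<k. u l j * u l j)" by simp
    also have "\<dots> = (\<Sum>l<k. dot n (u l) (u l))" unfolding dot_def by (rule sum.swap)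
    also have "\<dots> = real k" using on unfolding orthonormal_def by simp
    finally show False using kn by simp
  qed
  then obtain j where j: "j < n" "dot n (p j) (p j) \<noteq> 0" by blast
  then have pos: "dot n (p j) (p j) > 0" using dot_self_nonneg[of n "p j"] by linarith
  define v where "v = (\<lambda>i. 1 / sqrt (dot n (p j) (p j)) * p j i)"
  have "dot n v v = 1"
    using pos unfolding v_def dot_scale_left dot_scale_right by (simp add: field_simps)
  moreover have "vanishes_from n v" unfolding vanishes_from_def v_def p_def by auto
  moreover have "\<forall>l<k. dot n v (u l) = 0" unfolding v_def dot_scale_left using p_orthogonal j by simp
  ultimately show ?thesis by blast
qed

lemma continuous_on_coordinate: "continuous_on A (\<lambda>v::nat \<Rightarrow> real. v i)"
  by (rule continuous_on_subset[OF continuous_on_product_coordinates]) simp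

lemma continuous_on_dot:
  "(\<And>i. continuous_on A (\<lambda>v. x v i)) \<Longrightarrow> (\<And>i. continuous_on A (\<lambda>v. y v i))
    \<Longrightarrow> continuous_on A (\<lambda>v. dot n (x v) (y v))"
  unfolding dot_def by (intro continuous_on_sum continuous_on_mult)

lemma continuous_on_mat_vec: "continuous_on A (\<lambda>v. mat_vec n a v i)"
  unfolding mat_vec_def
  by (cases "i < n")
     (auto intro!: continuous_on_sum continuous_on_mult continuous_on_const continuous_on_coordinate)

lemma compact_unit_vectors_orthogonal:
  "compact {v. vanishes_from n v \<and> dot n v v = 1 \<and> (\<forall>l<k. dot n v (u l) = 0)}"
  (is "compact ?S")
proof -
  define B where "B i = (if i < n then {-1..1} else {0::real})" for i
  have "compactin (product_topology (\<lambda>i. euclidean) UNIV) (PiE UNIV B)"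
    by (subst compactin_PiE) (simp add: B_def)
  then have box: "compact (PiE UNIV B)" by (simp add: euclidean_product_topology)
  define C where "C = {v. dot n v v = 1} \<inter> (\<Inter>l\<in>{..<k}. {v. dot n v (u l) = 0})"
  have "closed C" unfolding C_def
    by (intro closed_Int closed_INT closed_Collect_eq continuous_on_dot continuous_on_coordinate
        continuous_on_const ballI)
  have coord_bound: "\<bar>v i\<bar> \<le> 1" if "dot n v v = 1" "i < n" for v i
  proof -
    have "v i * v i \<le> (\<Sum>i<n. v i * v i)" using that by (intro member_le_sum) auto
    then have "(v i)\<^sup>2 \<le> 1\<^sup>2" using that unfolding dot_def by (simp add: power2_eq_square)
    then show ?thesis using abs_le_square_iff[of "v i" 1] by simp
  qed
  have "?S = PiE UNIV B \<inter> C"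
  proof (intro equalityI subsetI)
    fix v assume v: "v \<in> ?S"
    then have "v i \<in> B i" for i
      using coord_bound[of v i] unfolding B_def vanishes_from_def by (auto simp: abs_le_iff)
    then show "v \<in> PiE UNIV B \<inter> C" using v by (auto simp: PiE_UNIV_domain C_def)
  next
    fix v assume v: "v \<in> PiE UNIV B \<inter> C"
    then have "v i = 0" if "\<not> i < n" for i
      using that by (auto simp: PiE_UNIV_domain Pi_iff B_def dest!: spec[of _ i])
    then show "v \<in> ?S" using v unfolding vanishes_from_def C_def by auto
  qed
  then show ?thesis using compact_Int_closed[OF box \<open>closed C\<close>] by simp
qed

lemma exists_Rayleigh_minimizer:
  assumes kn: "k < n" and on: "orthonormal n k u"
  obtains v where "vanishes_from n v" "dot n v v = 1" "\<forall>l<k. dot n v (u l) = 0"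
    and "\<And>w. vanishes_from n w \<Longrightarrow> \<forall>l<k. dot n w (u l) = 0
           \<Longrightarrow> dot n w (mat_vec n a w) \<ge> dot n v (mat_vec n a v) * dot n w w"
proof -
  define S where "S = {v. vanishes_from n v \<and> dot n v v = 1 \<and> (\<forall>l<k. dot n v (u l) = 0)}"
  have "S \<noteq> {}" using exists_unit_orthogonal[OF kn on] unfolding S_def by auto
  have "continuous_on S (\<lambda>v. dot n v (mat_vec n a v))"
    by (intro continuous_on_dot continuous_on_coordinate continuous_on_mat_vec)
  then obtain v where v: "v \<in> S"
    and vmin: "\<And>w. w \<in> S \<Longrightarrow> dot n v (mat_vec n a v) \<le> dot n w (mat_vec n a w)"
    using continuous_attains_inf[OF compact_unit_vectors_orthogonal[of n k u, folded S_def] \<open>S \<noteq> {}\<close>]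
    by blast
  have "dot n w (mat_vec n a w) \<ge> dot n v (mat_vec n a v) * dot n w w"
    if w: "vanishes_from n w" "\<forall>l<k. dot n w (u l) = 0" for w
  proof (cases "dot n w w = 0")
    case True
    then have "w i = 0" if "i < n" for i using dot_self_eq_0_imp that by blast
    then show ?thesis using True by (simp add: dot_def)
  next
    case False
    then have pos: "dot n w w > 0" using dot_self_nonneg[of n w] by linarith
    define r where "r = 1 / sqrt (dot n w w)"
    have rr: "r * r * dot n w w = 1" unfolding r_def using pos by (simp add: field_simps)
    define w' where "w' = (\<lambda>i. r * w i)"
    have "dot n w' w' = r * r * dot n w w" unfolding w'_def dot_scale_left dot_scale_right by simp
    then have "w' \<in> S"
      using w rr unfolding S_def vanishes_from_def by (simp add: w'_def dot_scale_left)
    then have "dot n v (mat_vec n a v) \<le> dot n w' (mat_vec n a w')" by (rule vmin)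
    also have "\<dots> = r * r * dot n w (mat_vec n a w)"
      unfolding w'_def mat_vec_scale dot_scale_left dot_scale_right by simp
    finally have "dot n v (mat_vec n a v) * dot n w w \<le> r * r * dot n w (mat_vec n a w) * dot n w w"
      using pos by (intro mult_right_mono) auto
    also have "\<dots> = dot n w (mat_vec n a w) * (r * r * dot n w w)" by (simp only: ac_simps)
    finally show ?thesis using rr by simp
  qed
  with v that show ?thesis unfolding S_def by blast
qed

lemma linear_coeff_eq_0_if_quadratic_nonneg:
  fixes b d :: real
  assumes "\<And>t. 2 * t * b + t\<^sup>2 * d \<ge> 0"
  shows "b = 0"
proof -
  define t where "t = - b / (\<bar>d\<bar> + 1)"
  have pos: "\<bar>d\<bar> + 1 > 0" by simp
  have "0 \<le> (2 * t * b + t\<^sup>2 * d) * (\<bar>d\<bar> + 1)\<^sup>2" using assms[of t] by simp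
  also have "\<dots> = 2 * b * (t * (\<bar>d\<bar> + 1)) * (\<bar>d\<bar> + 1) + (t * (\<bar>d\<bar> + 1))\<^sup>2 * d"
    by (simp add: power2_eq_square algebra_simps)
  also have "t * (\<bar>d\<bar> + 1) = - b" unfolding t_def using pos by simp
  also have "2 * b * (- b) * (\<bar>d\<bar> + 1) + (- b)\<^sup>2 * d = b\<^sup>2 * (d - 2 * \<bar>d\<bar> - 2)"
    by (simp add: power2_eq_square algebra_simps)
  finally have "0 \<le> b\<^sup>2 * (d - 2 * \<bar>d\<bar> - 2)" .
  moreover have "d - 2 * \<bar>d\<bar> - 2 < 0" by (simp add: abs_if)
  ultimately have "b\<^sup>2 \<le> 0" by (simp add: mult_le_0_iff zero_le_mult_iff)
  then show ?thesis by simp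
qed

text \<open>Minimality against the perturbations \<open>v + t z\<close> forces the first variation to vanish.\<close>
lemma Rayleigh_minimizer_stationary:
  assumes sym: "\<And>i j. i < n \<Longrightarrow> j < n \<Longrightarrow> a i j = a j i"
    and v: "vanishes_from n v" "dot n v v = 1" "\<forall>l<k. dot n v (u l) = 0"
    and vmin: "\<And>w. vanishes_from n w \<Longrightarrow> \<forall>l<k. dot n w (u l) = 0
                 \<Longrightarrow> dot n w (mat_vec n a w) \<ge> dot n v (mat_vec n a v) * dot n w w"
    and z: "vanishes_from n z" "\<forall>l<k. dot n z (u l) = 0"
  shows "dot n z (mat_vec n a v) = dot n v (mat_vec n a v) * dot n z v"
proof -
  define c where "c = dot n v (mat_vec n a v)"
  define b where "b = dot n z (mat_vec n a v) - c * dot n z v"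
  define d where "d = dot n z (mat_vec n a z) - c * dot n z z"
  have "2 * t * b + t\<^sup>2 * d \<ge> 0" for t
  proof -
    define w where "w = (\<lambda>i. v i + t * z i)"
    have "vanishes_from n w" using v(1) z(1) unfolding w_def vanishes_from_def by simp
    moreover have "\<forall>l<k. dot n w (u l) = 0"
      using v(3) z(2) unfolding w_def dot_add_left dot_scale_left by simp
    ultimately have "dot n w (mat_vec n a w) \<ge> c * dot n w w"
      using vmin unfolding c_def by (simp only: mult.commute)
    moreover have "dot n w (mat_vec n a w)
        = c + 2 * t * dot n z (mat_vec n a v) + t\<^sup>2 * dot n z (mat_vec n a z)"
      unfolding w_def mat_vec_add mat_vec_scale dot_add_left dot_add_right dot_scale_left
        dot_scale_right c_def
      using dot_mat_vec_symmetric[OF sym, where x=v and y=z] dot_commute[of n "mat_vec n a v" z]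
      by (simp add: power2_eq_square algebra_simps)
    moreover have "dot n w w = 1 + 2 * t * dot n z v + t\<^sup>2 * dot n z z"
      unfolding w_def dot_add_left dot_add_right dot_scale_left dot_scale_right
      using v(2) dot_commute[of n v z] by (simp add: power2_eq_square algebra_simps)
    ultimately show ?thesis unfolding b_def d_def by (simp add: algebra_simps)
  qed
  then have "b = 0" by (rule linear_coeff_eq_0_if_quadratic_nonneg)
  then show ?thesis unfolding b_def c_def by simp
qed

lemma exists_orthogonal_eigenvector:
  assumes sym: "\<And>i j. i < n \<Longrightarrow> j < n \<Longrightarrow> a i j = a j i"
    and kn: "k < n" and on: "orthonormal n k u"
    and eig: "\<And>l. l < k \<Longrightarrow> mat_vec n a (u l) = (\<lambda>i. \<mu> l * u l i)"
  shows "\<exists>v c. vanishes_from n v \<and> dot n v v = 1 \<and> (\<forall>l<k. dot n v (u l) = 0)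
                \<and> mat_vec n a v = (\<lambda>i. c * v i)"
proof -
  obtain v where v: "vanishes_from n v" "dot n v v = 1" "\<forall>l<k. dot n v (u l) = 0"
    and vmin: "\<And>w. vanishes_from n w \<Longrightarrow> \<forall>l<k. dot n w (u l) = 0
                 \<Longrightarrow> dot n w (mat_vec n a w) \<ge> dot n v (mat_vec n a v) * dot n w w"
    using exists_Rayleigh_minimizer[OF kn on] by blast
  define c where "c = dot n v (mat_vec n a v)"
  define z where "z = (\<lambda>i. mat_vec n a v i + (- c) * v i)"
  have z_vanishes: "vanishes_from n z"
    using v(1) unfolding z_def vanishes_from_def mat_vec_def by simp
  have z_orthogonal: "\<forall>l<k. dot n z (u l) = 0"
  proof (intro allI impI)
    fix l assume l: "l < k"
    have "dot n (mat_vec n a v) (u l) = dot n v (mat_vec n a (u l))"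
      by (rule dot_mat_vec_symmetric[OF sym])
    also have "\<dots> = \<mu> l * dot n v (u l)" unfolding eig[OF l] dot_scale_right ..
    finally show "dot n z (u l) = 0" unfolding z_def dot_add_left dot_scale_left using v(3) l by simp
  qed
  have "dot n z z = dot n z (mat_vec n a v) + (- c) * dot n z v"
    using dot_add_right[of n z "mat_vec n a v" "\<lambda>i. (- c) * v i"] dot_scale_right[of n z "- c" v]
    unfolding z_def[symmetric] by linarith
  moreover have "dot n z (mat_vec n a v) = c * dot n z v"
    unfolding c_def
    by (rule Rayleigh_minimizer_stationary[where a=a and u=u and k=k, OF sym v vmin z_vanishes z_orthogonal])
  ultimately have "dot n z z = 0" by simp
  then have "z i = 0" if "i < n" for i using dot_self_eq_0_imp that by blast
  then have "mat_vec n a v i = c * v i" for i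
    using v(1) unfolding z_def vanishes_from_def mat_vec_def by (cases "i < n") auto
  then show ?thesis using v by blast
qed

lemma exists_orthonormal_eigenbasis:
  assumes sym: "\<And>i j. i < n \<Longrightarrow> j < n \<Longrightarrow> a i j = a j i" and "k \<le> n"
  shows "\<exists>u \<mu>. orthonormal n k u \<and> (\<forall>l<k. mat_vec n a (u l) = (\<lambda>i. \<mu> l * u l i))"
  using \<open>k \<le> n\<close>
proof (induction k)
  case 0 then show ?case by (auto simp: orthonormal_def)
next
  case (Suc k)
  then obtain u \<mu> where on: "orthonormal n k u"
    and eig: "\<forall>l<k. mat_vec n a (u l) = (\<lambda>i. \<mu> l * u l i)"
    by auto
  obtain v c where v: "dot n v v = 1" "\<forall>l<k. dot n v (u l) = 0" "mat_vec n a v = (\<lambda>i. c * v i)"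
    using exists_orthogonal_eigenvector[where a=a and \<mu>=\<mu>, OF sym _ on] eig Suc.prems
    by (auto simp: Suc_le_eq)
  have "orthonormal n (Suc k) (u(k := v))"
    unfolding orthonormal_def
  proof (intro allI impI)
    fix l l' assume l: "l < Suc k" "l' < Suc k"
    show "dot n ((u(k := v)) l) ((u(k := v)) l') = (if l = l' then 1 else 0)"
    proof (cases "l = k")
      case True
      then show ?thesis using v l dot_commute[of n v "u l'"] by (cases "l' = k") auto
    next
      case False
      then show ?thesis using v l on dot_commute[of n "u l" v] unfolding orthonormal_def
        by (cases "l' = k") auto
    qed
  qed
  moreover have "\<forall>l<Suc k. mat_vec n a ((u(k := v)) l) = (\<lambda>i. (\<mu>(k := c)) l * (u(k := v)) l i)"
    using eig v by (auto simp: less_Suc_eq)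
  ultimately show ?case by blast
qed

definition basis_mat :: "nat \<Rightarrow> (nat \<Rightarrow> nat \<Rightarrow> real) \<Rightarrow> real Matrix.mat" where
  "basis_mat n u = Matrix.mat n n (\<lambda>(i, k). u k i)"

lemma basis_mat_orthogonal:
  assumes on: "orthonormal n n u"
  shows "transpose_mat (basis_mat n u) * basis_mat n u = 1\<^sub>m n"
    and "basis_mat n u * transpose_mat (basis_mat n u) = 1\<^sub>m n"
proof -
  show TU: "transpose_mat (basis_mat n u) * basis_mat n u = 1\<^sub>m n"
    using on by (intro eq_matI)
      (auto simp: basis_mat_def scalar_prod_def atLeast0LessThan orthonormal_def dot_def)
  then show "basis_mat n u * transpose_mat (basis_mat n u) = 1\<^sub>m n"
    using mat_mult_left_right_inverse[of "transpose_mat (basis_mat n u)" n "basis_mat n u"]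
    by (auto simp: basis_mat_def)
qed

lemma orthonormal_completeness:
  assumes "orthonormal n n u" "i < n" "j < n"
  shows "(\<Sum>k<n. u k i * u k j) = (if i = j then 1 else 0)"
  using arg_cong[OF basis_mat_orthogonal(2)[OF assms(1)], of "\<lambda>M. M $$ (i, j)"] assms(2,3)
  by (simp add: basis_mat_def scalar_prod_def atLeast0LessThan)

lemma Parseval:
  assumes on: "orthonormal n n u"
  shows "dot n x z = (\<Sum>k<n. dot n x (u k) * dot n z (u k))"
proof -
  have "dot n x z = (\<Sum>i<n. \<Sum>j<n. x i * z j * (if i = j then 1 else 0))"
    unfolding dot_def by (simp add: if_distrib cong: if_cong)
  also have "\<dots> = (\<Sum>i<n. \<Sum>j<n. \<Sum>k<n. x i * z j * (u k i * u k j))"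
    by (intro sum.cong refl) (simp add: orthonormal_completeness[OF on] sum_distrib_left[symmetric])
  also have "\<dots> = (\<Sum>i<n. \<Sum>k<n. \<Sum>j<n. x i * z j * (u k i * u k j))"
    by (intro sum.cong refl sum.swap)
  also have "\<dots> = (\<Sum>k<n. \<Sum>i<n. \<Sum>j<n. x i * z j * (u k i * u k j))"
    by (rule sum.swap)
  also have "\<dots> = (\<Sum>k<n. dot n x (u k) * dot n z (u k))"
    unfolding dot_def by (intro sum.cong refl) (simp add: sum_product mult_ac)
  finally show ?thesis .
qed

lemma char_poly_eq_prod_eigenvalues:
  assumes on: "orthonormal n n u"
    and eig: "\<And>k. k < n \<Longrightarrow> mat_vec n a (u k) = (\<lambda>i. \<mu> k * u k i)"
  shows "char_poly (Matrix.mat n n (\<lambda>(i, j). a i j)) = (\<Prod>x\<leftarrow>map \<mu> [0..<n]. [:- x, 1:])"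
proof -
  define A where "A = Matrix.mat n n (\<lambda>(i, j). a i j)"
  define U where "U = basis_mat n u"
  define D where "D = Matrix.mat n n (\<lambda>(i, j). if i = j then \<mu> i else (0::real))"
  have A: "A \<in> carrier_mat n n" and U: "U \<in> carrier_mat n n" and D: "D \<in> carrier_mat n n"
    unfolding A_def U_def D_def basis_mat_def by auto
  have AU: "A * U = U * D"
  proof (rule eq_matI)
    fix i k assume "i < dim_row (U * D)" "k < dim_col (U * D)"
    then have ik: "i < n" "k < n" using U D by auto
    have "(A * U) $$ (i, k) = mat_vec n a (u k) i"
      using ik by (simp add: A_def U_def basis_mat_def mat_vec_def scalar_prod_def atLeast0LessThan)
    also have "\<dots> = \<mu> k * u k i" using eig[OF ik(2)] by simp
    also have "\<dots> = (U * D) $$ (i, k)"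
      using ik by (simp add: U_def D_def basis_mat_def scalar_prod_def if_distrib cong: if_cong)
    finally show "(A * U) $$ (i, k) = (U * D) $$ (i, k)" .
  qed (use A U D in auto)
  have "A = A * (U * transpose_mat U)" using basis_mat_orthogonal(2)[OF on] A by (simp add: U_def)
  also have "\<dots> = U * D * transpose_mat U"
    using A U by (simp add: assoc_mult_mat[of A n n U n "transpose_mat U" n, symmetric] AU)
  finally have "similar_mat_wit A D U (transpose_mat U)"
    unfolding similar_mat_wit_def Let_def using A U D basis_mat_orthogonal[OF on]
    by (auto simp: U_def)
  then have "similar_mat A D" unfolding similar_mat_def by blast
  then have "char_poly A = char_poly D" by (rule char_poly_similar)
  also have "\<dots> = (\<Prod>a\<leftarrow>diag_mat D. [:- a, 1:])"
    by (rule char_poly_upper_triangular[OF D]) (auto simp: upper_triangular_def D_def)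
  also have "diag_mat D = map \<mu> [0..<n]" unfolding diag_mat_def D_def by auto
  finally show ?thesis unfolding A_def .
qed

lemma proots_prod_linear_factors: "proots (\<Prod>x\<leftarrow>xs. [:- x, 1:]) = mset (xs :: real list)"
proof (induction xs)
  case (Cons a xs)
  have nz: "(\<Prod>x\<leftarrow>xs. [:- x, 1:]) \<noteq> (0 :: real poly)" by (auto simp: prod_list_zero_iff)
  have "(\<Prod>x\<leftarrow>a # xs. [:- x, 1:]) = [:- a, 1:] * (\<Prod>x\<leftarrow>xs. [:- x, 1:])" by simp
  then have "proots (\<Prod>x\<leftarrow>a # xs. [:- x, 1:]) = proots [:- a, 1:] + proots (\<Prod>x\<leftarrow>xs. [:- x, 1:])"
    using nz by (simp only: proots_mult) (subst proots_mult, auto)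
  also have "proots [:- a, 1:] = {#a#}" using proots_linear_factor[of "-a"] by simp
  finally show ?case using Cons by simp
qed simp

lemma card_less_second_smallest:
  fixes \<mu> :: "nat \<Rightarrow> real"
  assumes "n \<ge> 2"
  shows "card {k. k < n \<and> \<mu> k < sort (map \<mu> [0..<n]) ! 1} \<le> 1"
proof -
  define xs where "xs = map \<mu> [0..<n]"
  define t where "t = sort xs ! 1"
  have "length (sort xs) \<ge> 2" using assms by (simp add: xs_def)
  then obtain a b r where sorted: "sort xs = a # b # r"
    by (cases "sort xs"; cases "tl (sort xs)") auto
  have "\<forall>x\<in>set r. b \<le> x" using sorted_sort[of xs] unfolding sorted by auto
  then have "filter (\<lambda>v. v < b) r = []" by (auto simp: filter_empty_conv)
  then have filter_sorted: "length (filter (\<lambda>v. v < t) (sort xs)) \<le> 1"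
    unfolding t_def sorted by simp
  have "card {k. k < n \<and> \<mu> k < t} = card {k. k < length xs \<and> xs ! k < t}"
    unfolding xs_def by (intro arg_cong[where f=card]) auto
  also have "\<dots> = length (filter (\<lambda>v. v < t) xs)" by (rule length_filter_conv_card[symmetric])
  also have "\<dots> = length (filter (\<lambda>v. v < t) (sort xs))" by (metis mset_filter mset_sort size_mset)
  finally show ?thesis using filter_sorted unfolding t_def xs_def by linarith
qed

lemma sum_eq_single_nonzero:
  assumes "finite A" "k0 \<in> A" "\<And>k. k \<in> A \<Longrightarrow> k \<noteq> k0 \<Longrightarrow> f k = 0"
  shows "sum f A = (f k0 :: real)"
  using assms by (subst sum.remove[of A k0]) (auto intro!: sum.neutral)

lemma quadratic_form_eigen_expansion:
  assumes sym: "\<And>i j. i < n \<Longrightarrow> j < n \<Longrightarrow> a i j = a j i" and on: "orthonormal n n u"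
    and eig: "\<forall>k<n. mat_vec n a (u k) = (\<lambda>i. \<mu> k * u k i)"
  shows "dot n y (mat_vec n a y) = (\<Sum>k<n. \<mu> k * (dot n y (u k))\<^sup>2)"
proof -
  have "dot n y (mat_vec n a y) = (\<Sum>k<n. dot n (mat_vec n a y) (u k) * dot n y (u k))"
    using Parseval[OF on, where x="mat_vec n a y" and z=y] by (simp only: dot_commute[of n y])
  also have "\<dots> = (\<Sum>k<n. \<mu> k * (dot n y (u k))\<^sup>2)"
  proof (intro sum.cong refl)
    fix k assume "k \<in> {..<n}"
    have "dot n (mat_vec n a y) (u k) = dot n y (mat_vec n a (u k))"
      by (rule dot_mat_vec_symmetric[where a=a, OF sym])
    also have "\<dots> = \<mu> k * dot n y (u k)" using eig \<open>k \<in> {..<n}\<close> by (simp add: dot_scale_right)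
    finally have "dot n (mat_vec n a y) (u k) = \<mu> k * dot n y (u k)" .
    then show "dot n (mat_vec n a y) (u k) * dot n y (u k) = \<mu> k * (dot n y (u k))\<^sup>2"
      by (simp add: power2_eq_square)
  qed
  finally show ?thesis .
qed

lemma quadratic_form_ge_second_eigenvalue:
  assumes sym: "\<And>i j. i < n \<Longrightarrow> j < n \<Longrightarrow> a i j = a j i" and n2: "n \<ge> 2"
    and kernel: "\<And>i. mat_vec n a z i = 0" and z: "dot n z z > 0"
    and y: "dot n y z = 0"
  defines "t \<equiv> sorted_list_of_multiset (proots (char_poly (Matrix.mat n n (\<lambda>(i, j). a i j)))) ! 1"
  assumes pos: "t > 0"
  shows "dot n y (mat_vec n a y) \<ge> t * dot n y y"
proof -
  obtain u \<mu> where on: "orthonormal n n u"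
    and eig: "\<forall>k<n. mat_vec n a (u k) = (\<lambda>i. \<mu> k * u k i)"
    using exists_orthonormal_eigenbasis[where a=a, OF sym, of n] by blast
  have char_poly: "char_poly (Matrix.mat n n (\<lambda>(i, j). a i j)) = (\<Prod>x\<leftarrow>map \<mu> [0..<n]. [:- x, 1:])"
    using eig by (intro char_poly_eq_prod_eigenvalues[OF on]) auto
  have t_sort: "t = sort (map \<mu> [0..<n]) ! 1"
    unfolding t_def char_poly proots_prod_linear_factors sorted_list_of_multiset_mset ..
  define K where "K = {k. k < n \<and> \<mu> k < t}"
  have card_K: "card K \<le> 1" unfolding K_def t_sort using card_less_second_smallest[OF n2] .
  define c where "c k = dot n y (u k)" for k
  define d where "d k = dot n z (u k)" for k
  have \<mu>_d: "\<mu> k * d k = 0" if "k < n" for k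
  proof -
    have "\<mu> k * d k = dot n z (mat_vec n a (u k))"
      unfolding d_def using eig that by (simp add: dot_scale_right)
    also have "\<dots> = dot n (mat_vec n a z) (u k)"
      by (rule dot_mat_vec_symmetric[where a=a, OF sym, symmetric])
    finally show ?thesis unfolding dot_def kernel by simp
  qed
  have yy: "dot n y y = (\<Sum>k<n. (c k)\<^sup>2)"
    unfolding c_def Parseval[OF on, of y y] by (simp add: power2_eq_square)
  have zz: "(\<Sum>k<n. (d k)\<^sup>2) = dot n z z"
    unfolding d_def Parseval[OF on, of z z] by (simp add: power2_eq_square)
  have yz: "(\<Sum>k<n. c k * d k) = 0"
    using y unfolding c_def d_def Parseval[OF on, of y z] .
  have yAy: "dot n y (mat_vec n a y) = (\<Sum>k<n. \<mu> k * (c k)\<^sup>2)"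
    unfolding c_def using quadratic_form_eigen_expansion[where a=a, OF sym on] eig by simp
  text \<open>
    At most one eigenvalue lies below \<open>t > 0\<close>, and \<open>z\<close> is orthogonal to all eigenvectors of
    nonzero eigenvalue, so \<open>z\<close> is a multiple of the eigenvector of that eigenvalue and
    \<open>y \<bottom> z\<close> has no component along it.
  \<close>
  have c_below: "c k0 = 0" if k0: "k0 < n" "\<mu> k0 < t" for k0
  proof -
    have others: "d k = 0" if "k < n" "k \<noteq> k0" for k
    proof -
      have "\<mu> k \<ge> t"
      proof (rule ccontr)
        assume "\<not> \<mu> k \<ge> t"
        then have "{k, k0} \<subseteq> K" unfolding K_def using k0 that by auto
        then have "card {k, k0} \<le> card K" by (rule card_mono[rotated]) (simp add: K_def)
        then show False using card_K that by simp
      qed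
      then show ?thesis using \<mu>_d[OF that(1)] pos by auto
    qed
    have "(\<Sum>k<n. (d k)\<^sup>2) = (d k0)\<^sup>2" by (rule sum_eq_single_nonzero) (use k0 others in auto)
    then have "d k0 \<noteq> 0" using zz z by auto
    moreover have "(\<Sum>k<n. c k * d k) = c k0 * d k0"
      by (rule sum_eq_single_nonzero) (use k0 others in auto)
    ultimately show ?thesis using yz by simp
  qed
  have "dot n y (mat_vec n a y) - t * dot n y y = (\<Sum>k<n. (\<mu> k - t) * (c k)\<^sup>2)"
    unfolding yAy yy by (simp add: sum_distrib_left sum_subtractf[symmetric] algebra_simps)
  also have "\<dots> \<ge> 0"
  proof (intro sum_nonneg)
    fix k assume "k \<in> {..<n}"
    then show "(\<mu> k - t) * (c k)\<^sup>2 \<ge> 0" using c_below[of k] by (cases "\<mu> k < t") auto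
  qed
  finally show ?thesis by simp
qed

section \<open>The graph Laplacian\<close>

lemma finite_nbrs: "finite (nbrs n E i)"
  unfolding nbrs_def by auto

lemma sum_nbrs: "(\<Sum>j\<in>nbrs n E i. f j) = (\<Sum>j<n. if E i j then f j else 0)"
  unfolding nbrs_def by (simp add: sum.If_cases Collect_conj_eq lessThan_def Int_commute)

lemma real_deg_eq_sum: "real (deg n E i) = (\<Sum>j<n. if E i j then 1 else 0)"
  unfolding deg_def using sum_nbrs[where f="\<lambda>_. 1::real"] by simp

lemma deg_pos_if_edge: "j < n \<Longrightarrow> E i j \<Longrightarrow> deg n E i > 0"
  unfolding deg_def using finite_nbrs[of n E i] by (auto simp: card_gt_0_iff nbrs_def)

definition laplacian_fun :: "nat \<Rightarrow> (nat \<Rightarrow> nat \<Rightarrow> bool) \<Rightarrow> nat \<Rightarrow> nat \<Rightarrow> real" where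
  "laplacian_fun n E i j = laplacian n E $$ (i, j)"

lemma mat_laplacian_fun: "Matrix.mat n n (\<lambda>(i, j). laplacian_fun n E i j) = laplacian n E"
  by (intro eq_matI) (auto simp: laplacian_fun_def laplacian_def)

locale undirected_graph =
  fixes n :: nat and E :: "nat \<Rightarrow> nat \<Rightarrow> bool"
  assumes sym: "\<And>i j. i < n \<Longrightarrow> j < n \<Longrightarrow> E i j \<Longrightarrow> E j i"
    and irrefl: "\<And>i. i < n \<Longrightarrow> \<not> E i i"
begin

lemma sum_edges_swap:
  "(\<Sum>i<n. \<Sum>j<n. if E i j then f i j else 0) = (\<Sum>i<n. \<Sum>j<n. if E i j then f j i else (0::real))"
proof -
  have "(\<Sum>i<n. \<Sum>j<n. if E i j then f i j else 0) = (\<Sum>j<n. \<Sum>i<n. if E i j then f i j else 0)"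
    by (rule sum.swap)
  also have "\<dots> = (\<Sum>i<n. \<Sum>j<n. if E i j then f j i else 0)"
    using sym by (intro sum.cong refl) (metis lessThan_iff)
  finally show ?thesis .
qed

lemma laplacian_fun_symmetric: "i < n \<Longrightarrow> j < n \<Longrightarrow> laplacian_fun n E i j = laplacian_fun n E j i"
  using sym by (auto simp: laplacian_fun_def laplacian_def)

lemma mat_vec_laplacian:
  assumes i: "i < n"
  shows "mat_vec n (laplacian_fun n E) y i = (\<Sum>j<n. if E i j then y i - y j else 0)"
proof -
  have "mat_vec n (laplacian_fun n E) y i
      = (\<Sum>j<n. (if i = j then real (deg n E i) * y i else 0) - (if E i j then y j else 0))"
    unfolding mat_vec_def using i irrefl
    by (auto simp: laplacian_fun_def laplacian_def intro!: sum.cong)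
  also have "\<dots> = (\<Sum>j<n. if E i j then y i - y j else 0)"
    using i unfolding sum_subtractf real_deg_eq_sum sum_distrib_right
    by (simp add: sum_subtractf[symmetric] if_distrib cong: if_cong)
  finally show ?thesis .
qed

lemma laplacian_kernel: "mat_vec n (laplacian_fun n E) (\<lambda>_. 1) i = 0"
proof (cases "i < n")
  case True
  then show ?thesis by (simp add: mat_vec_laplacian cong: if_cong)
qed (simp add: mat_vec_def)

lemma laplacian_quadratic_form:
  "2 * dot n y (mat_vec n (laplacian_fun n E) y) = (\<Sum>i<n. \<Sum>j<n. if E i j then (y i - y j)\<^sup>2 else 0)"
proof -
  have forward: "dot n y (mat_vec n (laplacian_fun n E) y)
      = (\<Sum>i<n. \<Sum>j<n. if E i j then y i * (y i - y j) else 0)"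
    unfolding dot_def
    by (intro sum.cong refl) (auto simp: mat_vec_laplacian sum_distrib_left intro!: sum.cong)
  also have backward: "\<dots> = (\<Sum>i<n. \<Sum>j<n. if E i j then y j * (y j - y i) else 0)"
    by (rule sum_edges_swap)
  finally have "2 * dot n y (mat_vec n (laplacian_fun n E) y)
      = (\<Sum>i<n. \<Sum>j<n. if E i j then y i * (y i - y j) else 0)
        + (\<Sum>i<n. \<Sum>j<n. if E i j then y j * (y j - y i) else 0)"
    using forward by linarith
  also have "\<dots> = (\<Sum>i<n. \<Sum>j<n. if E i j then (y i - y j)\<^sup>2 else 0)"
    unfolding sum.distrib[symmetric] by (intro sum.cong refl) (simp add: power2_eq_square algebra_simps)
  finally show ?thesis .
qed

lemma edge_sum_sq_ge_lambda2:
  assumes n2: "n \<ge> 2" and pos: "lambda2 n E > 0"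
  shows "(\<Sum>j<n. \<Sum>k<n. if E j k then (x j - x k)\<^sup>2 else 0)
      \<ge> 2 * lambda2 n E * (\<Sum>j<n. (x j - (\<Sum>i<n. x i) / real n)\<^sup>2)"
proof -
  define y where "y j = x j - (\<Sum>i<n. x i) / real n" for j
  have y_orthogonal: "dot n y (\<lambda>_. 1) = 0"
    unfolding dot_def y_def using n2 by (simp add: sum_subtractf)
  have "lambda2 n E * dot n y y \<le> dot n y (mat_vec n (laplacian_fun n E) y)"
    using quadratic_form_ge_second_eigenvalue[of n "laplacian_fun n E" "\<lambda>_. 1" y]
      laplacian_fun_symmetric n2 laplacian_kernel y_orthogonal pos
    unfolding lambda2_def lap_eigenvalues_def mat_laplacian_fun
    by (simp add: dot_def)
  moreover have "(\<Sum>j<n. \<Sum>k<n. if E j k then (x j - x k)\<^sup>2 else 0)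
      = 2 * dot n y (mat_vec n (laplacian_fun n E) y)"
    unfolding laplacian_quadratic_form y_def by (intro sum.cong refl) (auto simp: algebra_simps)
  ultimately show ?thesis unfolding dot_def y_def by (simp add: power2_eq_square mult.assoc)
qed

end

section \<open>The potential and the flow inequality\<close>

lemma Psi0_nonneg: "(\<And>i. i < n \<Longrightarrow> s i > 0) \<Longrightarrow> Psi0 n s m w \<ge> 0"
  unfolding Psi0_def by (auto intro!: sum_nonneg divide_nonneg_pos)

lemma Psi0_eq_sum_load_dev:
  assumes spos: "\<And>i. i < n \<Longrightarrow> s i > 0"
  shows "Psi0 n s m w = (\<Sum>j<n. s j * (load s w j - real m / Stot n s)\<^sup>2)"
  unfolding Psi0_def load_def
proof (intro sum.cong refl)
  fix j assume "j \<in> {..<n}"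
  then have "s j > 0" using spos by simp
  then show "(real (w j) - real m * s j / Stot n s)\<^sup>2 / s j
      = s j * (real (w j) / s j - real m / Stot n s)\<^sup>2"
    by (simp add: field_simps power2_eq_square)
qed

text \<open>
  \<open>\<Psi>\<^sub>0\<close> is the \<open>s\<close>-weighted sum of squared deviations of the loads from their weighted mean
  \<open>m / \<S>\<close>, and the weighted mean minimises this sum.
\<close>
lemma Psi0_le_smax_sum_sq_dev:
  assumes spos: "\<And>i. i < n \<Longrightarrow> s i > 0" and ssm: "\<And>i. i < n \<Longrightarrow> s i \<le> sm"
    and Spos: "Stot n s > 0" and tasks: "(\<Sum>i<n. w i) = m"
  shows "Psi0 n s m w \<le> sm * (\<Sum>j<n. (load s w j - a)\<^sup>2)"
proof -
  define L where "L = real m / Stot n s"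
  define l where "l = load s w"
  have centred: "(\<Sum>j<n. s j * (l j - L)) = 0"
  proof -
    have "s j * (l j - L) = real (w j) - L * s j" if "j < n" for j
      using spos[OF that] by (simp add: l_def load_def field_simps)
    then have "(\<Sum>j<n. s j * (l j - L)) = (\<Sum>j<n. real (w j) - L * s j)" by simp
    also have "\<dots> = real m - L * Stot n s"
      by (simp add: sum_subtractf sum_distrib_left Stot_def tasks flip: of_nat_sum)
    also have "\<dots> = 0" using Spos by (simp add: L_def)
    finally show ?thesis .
  qed
  have "(\<Sum>j<n. s j * (l j - a)\<^sup>2)
      = (\<Sum>j<n. s j * (l j - L)\<^sup>2 + 2 * (L - a) * (s j * (l j - L)) + (L - a)\<^sup>2 * s j)"
    by (intro sum.cong refl) (simp add: power2_eq_square algebra_simps)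
  also have "\<dots> = (\<Sum>j<n. s j * (l j - L)\<^sup>2) + 2 * (L - a) * (\<Sum>j<n. s j * (l j - L))
                  + (L - a)\<^sup>2 * Stot n s"
    unfolding Stot_def by (simp add: sum.distrib sum_distrib_left)
  finally have "Psi0 n s m w \<le> (\<Sum>j<n. s j * (l j - a)\<^sup>2)"
    using Psi0_eq_sum_load_dev[OF spos] centred Spos unfolding l_def L_def by simp
  also have "\<dots> \<le> (\<Sum>j<n. sm * (l j - a)\<^sup>2)" using ssm by (intro sum_mono mult_right_mono) auto
  finally show ?thesis unfolding l_def by (simp add: sum_distrib_left)
qed

lemma sum_dev_times_net_flow:
  fixes \<phi> :: "nat \<Rightarrow> nat \<Rightarrow> real"
  shows "(\<Sum>j<n. (l j - L) * (\<Sum>k<n. \<phi> k j - \<phi> j k)) = (\<Sum>j<n. \<Sum>k<n. \<phi> j k * (l k - l j))"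
proof -
  have "(\<Sum>j<n. (l j - L) * (\<Sum>k<n. \<phi> k j - \<phi> j k))
      = (\<Sum>j<n. \<Sum>k<n. (l j - L) * \<phi> k j) - (\<Sum>j<n. \<Sum>k<n. (l j - L) * \<phi> j k)"
    by (simp add: sum_distrib_left right_diff_distrib sum_subtractf)
  also have "(\<Sum>j<n. \<Sum>k<n. (l j - L) * \<phi> k j) = (\<Sum>j<n. \<Sum>k<n. (l k - L) * \<phi> j k)"
    by (rule sum.swap)
  finally show ?thesis by (simp add: sum_subtractf[symmetric] algebra_simps)
qed

lemma sum_in_out_flow:
  fixes \<phi> :: "nat \<Rightarrow> nat \<Rightarrow> real"
  shows "(\<Sum>j<n. (\<Sum>k<n. \<phi> j k + \<phi> k j) / s j) = (\<Sum>j<n. \<Sum>k<n. \<phi> j k * (1 / s j + 1 / s k))"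
proof -
  have "(\<Sum>j<n. (\<Sum>k<n. \<phi> j k + \<phi> k j) / s j)
      = (\<Sum>j<n. \<Sum>k<n. \<phi> j k / s j) + (\<Sum>j<n. \<Sum>k<n. \<phi> k j / s j)"
    by (simp add: sum_divide_distrib add_divide_distrib sum.distrib)
  also have "(\<Sum>j<n. \<Sum>k<n. \<phi> k j / s j) = (\<Sum>j<n. \<Sum>k<n. \<phi> j k / s k)" by (rule sum.swap)
  finally show ?thesis by (simp add: sum.distrib[symmetric] algebra_simps)
qed

context undirected_graph
begin

lemma sum_sq_net_flow_le:
  fixes \<phi> :: "nat \<Rightarrow> nat \<Rightarrow> real"
  assumes spos: "\<And>i. i < n \<Longrightarrow> s i > 0"
    and \<phi>_nonneg: "\<And>i j. i < n \<Longrightarrow> j < n \<Longrightarrow> \<phi> i j \<ge> 0"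
    and \<phi>_edges: "\<And>i j. i < n \<Longrightarrow> j < n \<Longrightarrow> \<not> E i j \<Longrightarrow> \<phi> i j = 0"
  shows "(\<Sum>j<n. (\<Sum>k<n. \<phi> k j - \<phi> j k)\<^sup>2 / s j)
       \<le> (\<Sum>j<n. \<Sum>k<n. (\<phi> j k)\<^sup>2 * (real (deg n E j) / s j + real (deg n E k) / s k))"
proof -
  text \<open>Cauchy--Schwarz over the \<open>deg j\<close> neighbours of \<open>j\<close>.\<close>
  have net_flow_sq: "(\<Sum>k<n. \<phi> k j - \<phi> j k)\<^sup>2 \<le> real (deg n E j) * (\<Sum>k<n. (\<phi> k j)\<^sup>2 + (\<phi> j k)\<^sup>2)"
    if j: "j < n" for j
  proof -
    have "(\<Sum>k<n. \<phi> k j - \<phi> j k) = (\<Sum>k\<in>nbrs n E j. \<phi> k j - \<phi> j k)"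
      unfolding sum_nbrs using \<phi>_edges j sym by (intro sum.cong refl) auto
    then have "(\<Sum>k<n. \<phi> k j - \<phi> j k)\<^sup>2
        \<le> (\<Sum>k\<in>nbrs n E j. (\<phi> k j - \<phi> j k)\<^sup>2) * real (deg n E j)"
      using sum_squared_le_sum_of_squares unfolding deg_def by simp
    also have "(\<Sum>k\<in>nbrs n E j. (\<phi> k j - \<phi> j k)\<^sup>2) \<le> (\<Sum>k\<in>nbrs n E j. (\<phi> k j)\<^sup>2 + (\<phi> j k)\<^sup>2)"
    proof (intro sum_mono)
      fix k assume "k \<in> nbrs n E j"
      then have "0 \<le> \<phi> k j * \<phi> j k" using \<phi>_nonneg j by (simp add: nbrs_def)
      then show "(\<phi> k j - \<phi> j k)\<^sup>2 \<le> (\<phi> k j)\<^sup>2 + (\<phi> j k)\<^sup>2"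
        by (simp add: power2_eq_square algebra_simps)
    qed
    also have "\<dots> \<le> (\<Sum>k<n. (\<phi> k j)\<^sup>2 + (\<phi> j k)\<^sup>2)"
      by (rule sum_mono2) (auto simp: nbrs_def)
    finally show ?thesis by (simp add: mult_right_mono mult.commute)
  qed
  have "(\<Sum>j<n. (\<Sum>k<n. \<phi> k j - \<phi> j k)\<^sup>2 / s j)
      \<le> (\<Sum>j<n. real (deg n E j) / s j * (\<Sum>k<n. (\<phi> k j)\<^sup>2 + (\<phi> j k)\<^sup>2))"
  proof (intro sum_mono)
    fix j assume "j \<in> {..<n}"
    then show "(\<Sum>k<n. \<phi> k j - \<phi> j k)\<^sup>2 / s j
        \<le> real (deg n E j) / s j * (\<Sum>k<n. (\<phi> k j)\<^sup>2 + (\<phi> j k)\<^sup>2)"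
      using divide_right_mono[OF net_flow_sq, of j "s j"] spos[of j] by (simp add: field_simps)
  qed
  also have "\<dots> = (\<Sum>j<n. \<Sum>k<n. real (deg n E j) / s j * (\<phi> k j)\<^sup>2)
                  + (\<Sum>j<n. \<Sum>k<n. real (deg n E j) / s j * (\<phi> j k)\<^sup>2)"
    by (simp add: sum_distrib_left distrib_left sum.distrib)
  also have "(\<Sum>j<n. \<Sum>k<n. real (deg n E j) / s j * (\<phi> k j)\<^sup>2)
           = (\<Sum>j<n. \<Sum>k<n. real (deg n E k) / s k * (\<phi> j k)\<^sup>2)"
    by (rule sum.swap)
  finally show ?thesis by (simp add: sum.distrib[symmetric] algebra_simps)
qed

text \<open>
  The deterministic core of the drift computation: \<open>\<mu>\<close> and \<open>V\<close> are the means and (bounds on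
  the) variances of the new loads, written through the flows \<open>\<phi>\<close>.
\<close>
lemma Psi0_drop_ge_flow_sum:
  fixes \<phi> :: "nat \<Rightarrow> nat \<Rightarrow> real" and V \<mu> :: "nat \<Rightarrow> real"
  assumes spos: "\<And>i. i < n \<Longrightarrow> s i > 0"
    and \<phi>_nonneg: "\<And>i j. i < n \<Longrightarrow> j < n \<Longrightarrow> \<phi> i j \<ge> 0"
    and \<phi>_edges: "\<And>i j. i < n \<Longrightarrow> j < n \<Longrightarrow> \<not> E i j \<Longrightarrow> \<phi> i j = 0"
    and \<mu>: "\<And>j. j < n \<Longrightarrow> \<mu> j = real (w j) - (\<Sum>k<n. \<phi> j k) + (\<Sum>k<n. \<phi> k j)"
    and V: "\<And>j. j < n \<Longrightarrow> V j \<le> (\<Sum>k<n. \<phi> j k + \<phi> k j)"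
  shows "Psi0 n s m w - (\<Sum>j<n. ((\<mu> j - real m * s j / Stot n s)\<^sup>2 + V j) / s j)
     \<ge> (\<Sum>j<n. \<Sum>k<n. \<phi> j k * (2 * (load s w j - load s w k)
            - \<phi> j k * (real (deg n E j) / s j + real (deg n E k) / s k) - (1 / s j + 1 / s k)))"
proof -
  define L where "L = real m / Stot n s"
  define e where "e j = real (w j) - real m * s j / Stot n s" for j
  define D where "D j = (\<Sum>k<n. \<phi> k j - \<phi> j k)" for j
  have e_div: "e j / s j = load s w j - L" if "j < n" for j
    using spos[OF that] unfolding e_def load_def L_def by (simp add: field_simps)
  have \<mu>_dev: "\<mu> j - real m * s j / Stot n s = e j + D j" if "j < n" for j
    using \<mu>[OF that] unfolding e_def D_def by (simp add: sum_subtractf)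
  have "Psi0 n s m w - (\<Sum>j<n. ((\<mu> j - real m * s j / Stot n s)\<^sup>2 + V j) / s j)
      = (\<Sum>j<n. ((e j)\<^sup>2 - (e j + D j)\<^sup>2 - V j) / s j)"
    unfolding Psi0_def e_def[symmetric]
    by (simp add: sum_subtractf[symmetric] \<mu>_dev diff_divide_distrib add_divide_distrib diff_diff_eq)
  also have "\<dots> \<ge> (\<Sum>j<n. - 2 * (e j / s j) * D j - (D j)\<^sup>2 / s j - (\<Sum>k<n. \<phi> j k + \<phi> k j) / s j)"
  proof (intro sum_mono)
    fix j assume "j \<in> {..<n}"
    then have j: "j < n" by simp
    have "((e j)\<^sup>2 - (e j + D j)\<^sup>2 - V j) / s j \<ge> ((e j)\<^sup>2 - (e j + D j)\<^sup>2 - (\<Sum>k<n. \<phi> j k + \<phi> k j)) / s j"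
      using V[OF j] spos[OF j] by (intro divide_right_mono) auto
    then show "- 2 * (e j / s j) * D j - (D j)\<^sup>2 / s j - (\<Sum>k<n. \<phi> j k + \<phi> k j) / s j
        \<le> ((e j)\<^sup>2 - (e j + D j)\<^sup>2 - V j) / s j"
      using spos[OF j] by (simp add: field_simps power2_eq_square)
  qed
  also have "(\<Sum>j<n. - 2 * (e j / s j) * D j - (D j)\<^sup>2 / s j - (\<Sum>k<n. \<phi> j k + \<phi> k j) / s j)
      = - 2 * (\<Sum>j<n. (e j / s j) * D j) - (\<Sum>j<n. (D j)\<^sup>2 / s j)
        - (\<Sum>j<n. (\<Sum>k<n. \<phi> j k + \<phi> k j) / s j)"
    by (simp add: sum_subtractf sum_distrib_left mult.assoc)
  also have "(\<Sum>j<n. (e j / s j) * D j) = (\<Sum>j<n. \<Sum>k<n. \<phi> j k * (load s w k - load s w j))"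
    unfolding sum_dev_times_net_flow[where l="load s w" and L=L and \<phi>=\<phi>, symmetric] D_def
    by (intro sum.cong refl) (simp add: e_div)
  finally have drop: "Psi0 n s m w - (\<Sum>j<n. ((\<mu> j - real m * s j / Stot n s)\<^sup>2 + V j) / s j)
      \<ge> - 2 * (\<Sum>j<n. \<Sum>k<n. \<phi> j k * (load s w k - load s w j)) - (\<Sum>j<n. (D j)\<^sup>2 / s j)
        - (\<Sum>j<n. (\<Sum>k<n. \<phi> j k + \<phi> k j) / s j)" .
  have "(\<Sum>j<n. \<Sum>k<n. \<phi> j k * (2 * (load s w j - load s w k)
            - \<phi> j k * (real (deg n E j) / s j + real (deg n E k) / s k) - (1 / s j + 1 / s k)))
      = - 2 * (\<Sum>j<n. \<Sum>k<n. \<phi> j k * (load s w k - load s w j))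
        - (\<Sum>j<n. \<Sum>k<n. (\<phi> j k)\<^sup>2 * (real (deg n E j) / s j + real (deg n E k) / s k))
        - (\<Sum>j<n. \<Sum>k<n. \<phi> j k * (1 / s j + 1 / s k))"
    by (simp add: sum_subtractf[symmetric] sum_distrib_left power2_eq_square algebra_simps)
  then show ?thesis
    using drop sum_sq_net_flow_le[where s=s and \<phi>=\<phi>, OF spos \<phi>_nonneg \<phi>_edges, folded D_def]
      sum_in_out_flow[where \<phi>=\<phi> and s=s and n=n]
    by linarith
qed

end

section \<open>Bounds for single edges\<close>

text \<open>
  \<open>x\<close> is the load difference across an edge, \<open>\<phi>\<close> the expected flow along it, \<open>c = 1/s\<^sub>j + 1/s\<^sub>k\<close>,
  \<open>d = d\<^sub>j\<^sub>k\<close>, and \<open>sm\<close>, \<open>D\<close> stand for \<open>s\<^sub>m\<^sub>a\<^sub>x\<close> and \<open>\<Delta>\<close>.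
\<close>
lemma edge_gain_ge:
  fixes x sj sk sm d D dj dk :: real
  assumes sj: "sj \<ge> 1" and sk: "sk \<ge> 1" and sm: "sm \<ge> 1" and d1: "d \<ge> 1"
    and djd: "dj \<le> d" and dkd: "dk \<le> d" and dD: "d \<le> D" and dj0: "dj \<ge> 0" and dk0: "dk \<ge> 0"
  defines "c \<equiv> 1 / sj + 1 / sk"
  defines "\<phi> \<equiv> (if x > 1 / sk then x / (4 * sm * c * d) else 0)"
  shows "\<phi> * (2 * x - \<phi> * (dj / sj + dk / sk) - c) \<ge> (max 0 x)\<^sup>2 / (16 * D * sm) - 1 / (10 * sm * d)"
proof (cases "x > 1 / sk")
  case False
  then have ph: "\<phi> = 0" unfolding \<phi>_def by simp
  have "1 / sk \<le> 1" using sk by simp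
  then have "max 0 x \<le> 1" using False by simp
  then have "(max 0 x)\<^sup>2 \<le> 1" by (simp add: power_le_one)
  then have "(max 0 x)\<^sup>2 / (16 * D * sm) \<le> 1 / (16 * D * sm)"
    using dD d1 sm by (intro divide_right_mono) auto
  also have "\<dots> \<le> 1 / (10 * sm * d)"
    using dD d1 sm by (intro divide_left_mono) (auto intro!: mult_mono mult_pos_pos)
  finally show ?thesis unfolding ph by simp
next
  case True
  have cpos: "c > 0" unfolding c_def using sj sk by (auto simp: add_pos_pos)
  have "1 / sj \<le> 1" "1 / sk \<le> 1" using sj sk by auto
  then have c2: "c \<le> 2" unfolding c_def by linarith
  have xpos: "x > 0" using True sk by (smt (verit) divide_pos_pos)
  define K where "K = 4 * sm * d"
  have Kpos: "K > 0" unfolding K_def using sm d1 by simp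
  have ph: "\<phi> = x / (K * c)" unfolding \<phi>_def K_def using True by (simp add: mult.assoc)
  have php: "\<phi> > 0" unfolding ph using xpos Kpos cpos by simp
  have "dj / sj + dk / sk \<le> d / sj + d / sk"
    using sj sk djd dkd by (intro add_mono divide_right_mono) auto
  also have "\<dots> = d * c" unfolding c_def by (simp add: field_simps)
  finally have degb: "dj / sj + dk / sk \<le> d * c" .
  have "\<phi> * (dj / sj + dk / sk) \<le> \<phi> * (d * c)" using php degb by (intro mult_left_mono) auto
  also have "\<phi> * (d * c) = x / (4 * sm)" unfolding ph K_def using cpos d1 sm by (simp add: field_simps)
  also have "\<dots> \<le> x / 4" using xpos sm by (intro divide_left_mono) auto
  finally have b1: "\<phi> * (dj / sj + dk / sk) \<le> x / 4" .
  have "\<phi> * (2 * x - \<phi> * (dj / sj + dk / sk) - c) \<ge> \<phi> * (7 * x / 4 - c)"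
    using php b1 by (intro mult_left_mono) auto
  moreover have "\<phi> * (7 * x / 4 - c) = (7 * x\<^sup>2 / (4 * c) - x) / K"
    unfolding ph using cpos Kpos by (simp add: field_simps power2_eq_square)
  moreover have "7 * x\<^sup>2 / (4 * c) \<ge> 7 * x\<^sup>2 / 8"
    using cpos c2 by (intro divide_left_mono) auto
  moreover have "(7 * x\<^sup>2 / 8 - x) \<ge> x\<^sup>2 / 4 - 2 / 5"
  proof -
    have "0 \<le> 5 / 8 * (x - 4 / 5)\<^sup>2" by simp
    then show ?thesis by (simp add: power2_eq_square algebra_simps)
  qed
  moreover have "(max 0 x)\<^sup>2 / (16 * D * sm) - 1 / (10 * sm * d) \<le> (x\<^sup>2 / 4 - 2 / 5) / K"
  proof -
    have "(max 0 x)\<^sup>2 / (16 * D * sm) = x\<^sup>2 / (16 * D * sm)" using xpos by simp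
    also have "\<dots> \<le> x\<^sup>2 / (16 * d * sm)"
      using dD d1 sm by (intro divide_left_mono) (auto intro!: mult_mono)
    finally have "(max 0 x)\<^sup>2 / (16 * D * sm) - 1 / (10 * sm * d) \<le> x\<^sup>2 / (16 * d * sm) - 1 / (10 * sm * d)" by simp
    also have "\<dots> = (x\<^sup>2 / 4 - 2 / 5) / K" unfolding K_def using sm d1 by (simp add: field_simps)
    finally show ?thesis .
  qed
  ultimately have "\<phi> * (2 * x - \<phi> * (dj / sj + dk / sk) - c) \<ge> (x\<^sup>2 / 4 - 2 / 5) / K - 0"
    using Kpos by (smt (verit) divide_right_mono)
  moreover note \<open>(max 0 x)\<^sup>2 / (16 * D * sm) - 1 / (10 * sm * d) \<le> (x\<^sup>2 / 4 - 2 / 5) / K\<close>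
  ultimately show ?thesis by linarith
qed

context undirected_graph
begin

lemma sum_inv_max_deg_le:
  "(\<Sum>j<n. \<Sum>k<n. if E j k then 1 / real (max (deg n E j) (deg n E k)) else 0) \<le> real n"
proof -
  have row: "(\<Sum>k<n. if E j k then 1 / real (max (deg n E j) (deg n E k)) else 0) \<le> 1" for j
  proof -
    have "(\<Sum>k<n. if E j k then 1 / real (max (deg n E j) (deg n E k)) else 0)
        \<le> (\<Sum>k<n. if E j k then 1 / real (deg n E j) else 0)"
    proof (intro sum_mono)
      fix k assume "k \<in> {..<n}"
      then have "E j k \<Longrightarrow> deg n E j > 0" by (simp add: deg_pos_if_edge)
      then show "(if E j k then 1 / real (max (deg n E j) (deg n E k)) else 0)
          \<le> (if E j k then 1 / real (deg n E j) else 0)"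
        by (auto intro!: frac_le)
    qed
    also have "\<dots> = real (deg n E j) * (1 / real (deg n E j))"
      unfolding real_deg_eq_sum sum_distrib_right by (intro sum.cong) auto
    also have "\<dots> \<le> 1" by (cases "deg n E j = 0") auto
    finally show ?thesis .
  qed
  have "(\<Sum>j<n. \<Sum>k<n. if E j k then 1 / real (max (deg n E j) (deg n E k)) else 0) \<le> (\<Sum>j<n. 1)"
    using row by (intro sum_mono)
  then show ?thesis by simp
qed

lemma sum_edges_pos_part_sq:
  fixes x :: "nat \<Rightarrow> real"
  shows "(\<Sum>j<n. \<Sum>k<n. if E j k then (max 0 (x j - x k))\<^sup>2 else 0)
     = (\<Sum>j<n. \<Sum>k<n. if E j k then (x j - x k)\<^sup>2 else 0) / 2"
proof -
  have "(\<Sum>j<n. \<Sum>k<n. if E j k then (max 0 (x j - x k))\<^sup>2 else 0)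
      = (\<Sum>j<n. \<Sum>k<n. if E j k then (max 0 (x k - x j))\<^sup>2 else 0)"
    by (rule sum_edges_swap[where f="\<lambda>j k. (max 0 (x j - x k))\<^sup>2"])
  moreover have "(\<Sum>j<n. \<Sum>k<n. if E j k then (max 0 (x j - x k))\<^sup>2 else 0)
      + (\<Sum>j<n. \<Sum>k<n. if E j k then (max 0 (x k - x j))\<^sup>2 else 0)
      = (\<Sum>j<n. \<Sum>k<n. if E j k then (x j - x k)\<^sup>2 else 0)"
    unfolding sum.distrib[symmetric]
    by (intro sum.cong refl) (auto simp: max_def power2_eq_square algebra_simps)
  ultimately show ?thesis by simp
qed

end

section \<open>One round of the protocol\<close>

lemma set_pmf_task_step: "set_pmf (task_step n E s w i) \<subseteq> insert i (nbrs n E i)"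
  unfolding task_step_def using finite_nbrs[of n E i] by (auto split: if_splits)

lemma finite_set_pmf_task_step: "finite (set_pmf (task_step n E s w i))"
  by (rule finite_subset[OF set_pmf_task_step]) (simp add: finite_nbrs)

lemma pmf_bernoulli_choice:
  assumes "0 \<le> p" "p \<le> 1"
  shows "pmf (bernoulli_pmf p \<bind> (\<lambda>b. return_pmf (if b then k else i))) j
       = p * (if k = j then 1 else 0) + (1 - p) * (if i = j then 1 else 0)"
proof -
  have "pmf (bernoulli_pmf p \<bind> (\<lambda>b. return_pmf (if b then k else i))) j
      = (\<Sum>b\<in>UNIV. pmf (bernoulli_pmf p) b * pmf (return_pmf (if b then k else i)) j)"
    unfolding pmf_bind by (subst integral_measure_pmf[of UNIV]) auto
  also have "\<dots> = p * (if k = j then 1 else 0) + (1 - p) * (if i = j then 1 else 0)"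
    using assms by (simp add: UNIV_bool indicator_def)
  finally show ?thesis .
qed

lemma pmf_task_step:
  assumes "\<And>k. k \<in> nbrs n E i \<Longrightarrow> 0 \<le> move_prob n E s w i k \<and> move_prob n E s w i k \<le> 1"
  shows "pmf (task_step n E s w i) j =
     (if nbrs n E i = {} then (if i = j then 1 else 0)
      else (\<Sum>k\<in>nbrs n E i. move_prob n E s w i k * (if k = j then 1 else 0)
              + (1 - move_prob n E s w i k) * (if i = j then 1 else 0)) / real (deg n E i))"
  using assms finite_nbrs[of n E i]
  by (auto simp: task_step_def pmf_bind_pmf_of_set pmf_bernoulli_choice deg_def indicator_def
      intro!: sum.cong)

lemma pmf_task_step_move:
  assumes "\<And>k. k \<in> nbrs n E i \<Longrightarrow> 0 \<le> move_prob n E s w i k \<and> move_prob n E s w i k \<le> 1"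
    and "j \<noteq> i"
  shows "pmf (task_step n E s w i) j
       = (if j \<in> nbrs n E i then move_prob n E s w i j / real (deg n E i) else 0)"
proof -
  let ?q = "move_prob n E s w i"
  have "(\<Sum>k\<in>nbrs n E i. ?q k * (if k = j then 1 else 0) + (1 - ?q k) * (if i = j then 1 else 0))
      = (\<Sum>k\<in>nbrs n E i. if k = j then ?q k else 0)"
    using assms(2) by (intro sum.cong) auto
  also have "\<dots> = (if j \<in> nbrs n E i then ?q j else 0)" using finite_nbrs by (simp add: sum.delta)
  finally show ?thesis using pmf_task_step[OF assms(1)] assms(2) by auto
qed

lemma pmf_task_step_stay:
  assumes "\<And>k. k \<in> nbrs n E i \<Longrightarrow> 0 \<le> move_prob n E s w i k \<and> move_prob n E s w i k \<le> 1"
    and "i \<notin> nbrs n E i"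
  shows "pmf (task_step n E s w i) i
       = 1 - (\<Sum>k\<in>nbrs n E i. move_prob n E s w i k) / real (deg n E i)"
proof (cases "nbrs n E i = {}")
  case False
  then have "real (deg n E i) > 0" using finite_nbrs[of n E i] by (simp add: deg_def card_gt_0_iff)
  moreover have "(\<Sum>k\<in>nbrs n E i. move_prob n E s w i k * (if k = i then 1 else 0)
                    + (1 - move_prob n E s w i k)) = (\<Sum>k\<in>nbrs n E i. 1 - move_prob n E s w i k)"
    using assms(2) by (intro sum.cong) auto
  moreover have "\<dots> = real (deg n E i) - (\<Sum>k\<in>nbrs n E i. move_prob n E s w i k)"
    by (simp add: deg_def sum_subtractf)
  ultimately show ?thesis using False assms(1) by (simp add: pmf_task_step field_simps)
qed (use pmf_task_step[OF assms(1), of i] in simp)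

lemma sum_list_task_origins:
  "(\<Sum>a\<leftarrow>task_origins n w. g a) = (\<Sum>a<n. real (w a) * (g a :: real))"
  unfolding task_origins_def by (induction n) (auto simp: sum_list_replicate)

text \<open>The exact expected drop: the new number of tasks on \<open>j\<close> has mean \<open>\<mu> j\<close> and variance \<open>V j\<close>.\<close>
lemma expected_Psi0_drop:
  fixes n m :: nat and E :: "nat \<Rightarrow> nat \<Rightarrow> bool" and s :: "nat \<Rightarrow> real" and w :: "nat \<Rightarrow> nat"
  defines "P a j \<equiv> pmf (task_step n E s w a) j"
  defines "\<mu> j \<equiv> \<Sum>a<n. real (w a) * P a j"
  defines "V j \<equiv> \<Sum>a<n. real (w a) * (P a j * (1 - P a j))"
  shows "measure_pmf.expectation (round_step n E s w) (\<lambda>w'. Psi0 n s m w - Psi0 n s m w')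
       = Psi0 n s m w - (\<Sum>j<n. ((\<mu> j - real m * s j / Stot n s)\<^sup>2 + V j) / s j)"
proof -
  let ?S = "sample_all (task_step n E s w) (task_origins n w)"
  have fin: "finite (set_pmf ?S)" by (intro finite_set_pmf_sample_all finite_set_pmf_task_step)
  have "measure_pmf.expectation (round_step n E s w) (\<lambda>w'. Psi0 n s m w - Psi0 n s m w')
     = Psi0 n s m w - measure_pmf.expectation ?S (\<lambda>ds. Psi0 n s m (count_list ds))"
    unfolding round_step_def
    by (simp, subst Bochner_Integration.integral_diff) (auto simp: integrable_measure_pmf_finite fin)
  also have "measure_pmf.expectation ?S (\<lambda>ds. Psi0 n s m (count_list ds))
     = (\<Sum>j<n. measure_pmf.expectation ?S (\<lambda>ds. (real (count_list ds j) - real m * s j / Stot n s)\<^sup>2 / s j))"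
    unfolding Psi0_def
    by (rule Bochner_Integration.integral_sum) (auto simp: integrable_measure_pmf_finite fin)
  also have "\<dots> = (\<Sum>j<n. ((\<mu> j - real m * s j / Stot n s)\<^sup>2 + V j) / s j)"
    unfolding \<mu>_def V_def P_def
    by (simp only: expectation_sq_dev_count_sample_all finite_set_pmf_task_step sum_list_task_origins)
  finally show ?thesis .
qed

section \<open>Expected flows along the edges\<close>

definition expected_flow ::
    "nat \<Rightarrow> (nat \<Rightarrow> nat \<Rightarrow> bool) \<Rightarrow> (nat \<Rightarrow> real) \<Rightarrow> (nat \<Rightarrow> nat) \<Rightarrow> nat \<Rightarrow> nat \<Rightarrow> real" where
  "expected_flow n E s w j k =
     (if E j k then real (w j) * move_prob n E s w j k / real (deg n E j) else 0)"

lemma smax_ge: "i < n \<Longrightarrow> s i \<le> smax n s"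
  unfolding smax_def by (intro Max_ge) auto

lemma deg_le_max_deg: "i < n \<Longrightarrow> deg n E i \<le> max_deg n E"
  unfolding max_deg_def by (intro Max_ge) auto

locale processor_network = undirected_graph +
  fixes s :: "nat \<Rightarrow> real"
  assumes speed_ge_1: "\<And>i. i < n \<Longrightarrow> s i \<ge> 1"
begin

lemma speed_pos: "i < n \<Longrightarrow> s i > 0"
  using speed_ge_1[of i] by simp

lemma smax_ge_1: "n > 0 \<Longrightarrow> smax n s \<ge> 1"
  using smax_ge[of 0 n s] speed_ge_1[of 0] by simp

lemma Stot_pos: "n > 0 \<Longrightarrow> Stot n s > 0"
  unfolding Stot_def using speed_pos by (intro sum_pos) auto

lemma move_prob_eq:
  fixes w :: "nat \<Rightarrow> nat"
  assumes jk: "j < n" "k < n" "E j k"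
  defines "x \<equiv> load s w j - load s w k" and "c \<equiv> 1 / s j + 1 / s k"
    and "d \<equiv> real (max (deg n E j) (deg n E k))"
  shows "move_prob n E s w j k
       = (if x > 1 / s k then real (deg n E j) / d * x / (4 * smax n s * c * real (w j)) else 0)"
  unfolding move_prob_def x_def c_def d_def Let_def by simp

lemma load_diff_pos:
  assumes "j < n" "k < n" and moving: "load s w j - load s w k > 1 / s k"
  shows "load s w j - load s w k > 0" and "real (w j) > 0"
proof -
  have "1 / s k > 0" using speed_pos[OF assms(2)] by simp
  then show x_pos: "load s w j - load s w k > 0" using moving by linarith
  moreover have "load s w k \<ge> 0" using speed_pos[OF assms(2)] by (simp add: load_def)
  ultimately have "real (w j) / s j > 0" by (simp add: load_def)
  then show "real (w j) > 0" using speed_pos[OF assms(1)] by (simp add: zero_less_divide_iff)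
qed

lemma move_prob_bounds:
  assumes jk: "j < n" "k < n" "E j k"
  shows "0 \<le> move_prob n E s w j k \<and> move_prob n E s w j k \<le> 1"
proof (cases "load s w j - load s w k > 1 / s k")
  case True
  define x where "x = load s w j - load s w k"
  define c where "c = 1 / s j + 1 / s k"
  define d where "d = real (max (deg n E j) (deg n E k))"
  define \<alpha> where "\<alpha> = 4 * smax n s"
  have x_pos: "x > 0" and w_pos: "real (w j) > 0"
    using load_diff_pos[OF jk(1,2) True] by (simp_all add: x_def)
  have deg_pos: "real (deg n E j) \<ge> 1" using deg_pos_if_edge[of k n E j] jk by simp
  have deg_le: "real (deg n E j) / d \<le> 1" using deg_pos by (simp add: d_def)
  have c_pos: "c > 0" and c_ge: "c \<ge> 1 / s j"
    using speed_pos[of j] speed_pos[of k] jk by (simp_all add: c_def add_pos_pos)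
  have \<alpha>: "\<alpha> \<ge> 4" using smax_ge_1 jk by (simp add: \<alpha>_def)
  have "x \<le> real (w j) / s j"
    using speed_pos[OF jk(2)] by (simp add: x_def load_def)
  also have "\<dots> = 1 / s j * real (w j)" by simp
  also have "\<dots> \<le> \<alpha> * c * real (w j)"
    using c_ge c_pos \<alpha> w_pos by (intro mult_right_mono) (auto intro: order.trans[of _ c])
  finally have "x / (\<alpha> * c * real (w j)) \<le> 1"
    using \<alpha> c_pos w_pos by (simp add: divide_le_eq)
  then have "real (deg n E j) / d * (x / (\<alpha> * c * real (w j))) \<le> 1 * 1"
    using deg_le deg_pos x_pos \<alpha> c_pos w_pos by (intro mult_mono) (auto simp: d_def)
  moreover have "0 \<le> real (deg n E j) / d * (x / (\<alpha> * c * real (w j)))"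
    using x_pos w_pos c_pos \<alpha> by (simp add: d_def)
  ultimately show ?thesis using True
    by (simp add: move_prob_eq[OF jk] x_def c_def d_def \<alpha>_def times_divide_eq_right)
qed (simp add: move_prob_eq[OF jk])

lemma expected_flow_eq:
  assumes jk: "j < n" "k < n" "E j k"
  shows "expected_flow n E s w j k
     = (if load s w j - load s w k > 1 / s k
        then (load s w j - load s w k)
             / (4 * smax n s * (1 / s j + 1 / s k) * real (max (deg n E j) (deg n E k)))
        else 0)"
proof (cases "load s w j - load s w k > 1 / s k")
  case True
  define x where "x = load s w j - load s w k"
  define c where "c = 1 / s j + 1 / s k"
  define d where "d = real (max (deg n E j) (deg n E k))"
  define \<alpha> where "\<alpha> = 4 * smax n s"
  have "real (w j) > 0" using True by (rule load_diff_pos[OF jk(1,2)])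
  moreover have "real (deg n E j) > 0" using deg_pos_if_edge[of k n E j] jk by simp
  moreover have "d > 0" "c > 0" "\<alpha> > 0"
    using deg_pos_if_edge[of k n E j] jk speed_pos[of j] speed_pos[of k] smax_ge_1
    by (auto simp: d_def c_def \<alpha>_def add_pos_pos)
  ultimately have "real (w j) * (real (deg n E j) / d * x / (\<alpha> * c * real (w j))) / real (deg n E j)
      = x / (\<alpha> * c * d)"
    by (simp add: field_simps)
  then show ?thesis using True
    by (simp add: expected_flow_def move_prob_eq[OF jk] jk x_def c_def d_def \<alpha>_def mult.assoc)
qed (use jk in \<open>simp add: expected_flow_def move_prob_eq\<close>)

lemma expected_flow_nonneg: "j < n \<Longrightarrow> k < n \<Longrightarrow> expected_flow n E s w j k \<ge> 0"
  using move_prob_bounds by (simp add: expected_flow_def)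

lemma expected_flow_self: "j < n \<Longrightarrow> expected_flow n E s w j j = 0"
  using irrefl by (simp add: expected_flow_def)

lemma pmf_task_step_move_flow:
  assumes "a < n" "j < n" "j \<noteq> a"
  shows "real (w a) * pmf (task_step n E s w a) j = expected_flow n E s w a j"
proof -
  have "pmf (task_step n E s w a) j
      = (if j \<in> nbrs n E a then move_prob n E s w a j / real (deg n E a) else 0)"
    by (rule pmf_task_step_move) (use move_prob_bounds[of a] assms in \<open>auto simp: nbrs_def\<close>)
  then show ?thesis using assms by (simp add: expected_flow_def nbrs_def)
qed

lemma pmf_task_step_stay_flow:
  assumes "a < n"
  shows "real (w a) * pmf (task_step n E s w a) a = real (w a) - (\<Sum>k<n. expected_flow n E s w a k)"
proof -
  have "pmf (task_step n E s w a) a = 1 - (\<Sum>k\<in>nbrs n E a. move_prob n E s w a k) / real (deg n E a)"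
    using assms move_prob_bounds[of a] irrefl by (intro pmf_task_step_stay) (auto simp: nbrs_def)
  moreover have "(\<Sum>k<n. expected_flow n E s w a k)
      = real (w a) * (\<Sum>k\<in>nbrs n E a. move_prob n E s w a k) / real (deg n E a)"
    unfolding expected_flow_def sum_nbrs sum_distrib_left sum_divide_distrib by (intro sum.cong) auto
  ultimately show ?thesis by (simp add: right_diff_distrib)
qed

end

lemma sum_if_eq_point:
  assumes "finite A" "j \<in> A"
  shows "(\<Sum>a\<in>A. if a = j then X else f a) = X + (\<Sum>a\<in>A. f a) - (f j :: real)"
  using assms by (simp add: sum.If_cases Int_absorb1 sum_diff1 Diff_eq[symmetric]
      flip: Compl_eq_Diff_UNIV)

context processor_network
begin

lemma mean_tasks_after_round:
  assumes j: "j < n"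
  shows "(\<Sum>a<n. real (w a) * pmf (task_step n E s w a) j)
       = real (w j) - (\<Sum>k<n. expected_flow n E s w j k) + (\<Sum>k<n. expected_flow n E s w k j)"
proof -
  have "(\<Sum>a<n. real (w a) * pmf (task_step n E s w a) j)
      = (\<Sum>a<n. if a = j then real (w j) - (\<Sum>k<n. expected_flow n E s w j k)
                 else expected_flow n E s w a j)"
    using j by (intro sum.cong refl) (auto simp: pmf_task_step_move_flow pmf_task_step_stay_flow)
  also have "\<dots> = real (w j) - (\<Sum>k<n. expected_flow n E s w j k) + (\<Sum>k<n. expected_flow n E s w k j)"
    using j by (simp add: sum_if_eq_point expected_flow_self)
  finally show ?thesis .
qed

lemma variance_tasks_after_round_le:
  assumes j: "j < n"
  shows "(\<Sum>a<n. real (w a) * (pmf (task_step n E s w a) j * (1 - pmf (task_step n E s w a) j)))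
       \<le> (\<Sum>k<n. expected_flow n E s w j k + expected_flow n E s w k j)"
proof -
  let ?P = "\<lambda>a. pmf (task_step n E s w a) j"
  have "(\<Sum>a<n. real (w a) * (?P a * (1 - ?P a)))
      \<le> (\<Sum>a<n. if a = j then (\<Sum>k<n. expected_flow n E s w j k) else expected_flow n E s w a j)"
  proof (intro sum_mono)
    fix a assume "a \<in> {..<n}"
    then have a: "a < n" by simp
    have P: "0 \<le> ?P a" "?P a \<le> 1" by (auto simp: pmf_le_1)
    show "real (w a) * (?P a * (1 - ?P a))
        \<le> (if a = j then (\<Sum>k<n. expected_flow n E s w j k) else expected_flow n E s w a j)"
    proof (cases "a = j")
      case True
      have "real (w a) * (?P a * (1 - ?P a)) \<le> real (w a) * (1 - ?P a)"
        using P by (intro mult_left_mono) (auto intro: mult_left_le_one_le)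
      moreover have "real (w a) * (1 - ?P a) = (\<Sum>k<n. expected_flow n E s w j k)"
        using pmf_task_step_stay_flow[OF a, of w] True by (simp add: right_diff_distrib)
      ultimately show ?thesis using True by simp
    next
      case False
      have "real (w a) * (?P a * (1 - ?P a)) \<le> real (w a) * ?P a"
        using P by (intro mult_left_mono) (auto intro: mult_right_le_one_le)
      then show ?thesis using pmf_task_step_move_flow[OF a j] False by simp
    qed
  qed
  also have "\<dots> = (\<Sum>k<n. expected_flow n E s w j k + expected_flow n E s w k j)"
    using j by (simp add: sum_if_eq_point expected_flow_self sum.distrib)
  finally show ?thesis .
qed

lemma expected_drop_ge_flow_gain:
  "measure_pmf.expectation (round_step n E s w) (\<lambda>w'. Psi0 n s m w - Psi0 n s m w')
     \<ge> (\<Sum>j<n. \<Sum>k<n. expected_flow n E s w j k * (2 * (load s w j - load s w k)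
          - expected_flow n E s w j k * (real (deg n E j) / s j + real (deg n E k) / s k)
          - (1 / s j + 1 / s k)))"
  unfolding expected_Psi0_drop
  by (rule Psi0_drop_ge_flow_sum[OF speed_pos expected_flow_nonneg _ mean_tasks_after_round
      variance_tasks_after_round_le]) (simp_all add: expected_flow_def)

lemma expected_drop_ge_edge_sum:
  fixes w :: "nat \<Rightarrow> nat"
  assumes n: "n > 0"
  defines "Q \<equiv> \<Sum>j<n. \<Sum>k<n. if E j k then (load s w j - load s w k)\<^sup>2 else 0"
  shows "measure_pmf.expectation (round_step n E s w) (\<lambda>w'. Psi0 n s m w - Psi0 n s m w')
     \<ge> Q / (32 * real (max_deg n E) * smax n s) - real n / (10 * smax n s)"
proof -
  define sm where "sm = smax n s"
  define K where "K = 16 * real (max_deg n E) * sm"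
  define l where "l = load s w"
  define \<phi> where "\<phi> = expected_flow n E s w"
  define d where "d j k = real (max (deg n E j) (deg n E k))" for j k
  define T where "T j k = \<phi> j k * (2 * (l j - l k)
      - \<phi> j k * (real (deg n E j) / s j + real (deg n E k) / s k) - (1 / s j + 1 / s k))" for j k
  have sm: "sm \<ge> 1" using smax_ge_1[OF n] by (simp add: sm_def)
  have edge: "T j k \<ge> (max 0 (l j - l k))\<^sup>2 / K - 1 / (10 * sm * d j k)"
    if jk: "j < n" "k < n" "E j k" for j k
  proof -
    have "d j k \<ge> 1" using deg_pos_if_edge[of k n E j] jk by (simp add: d_def)
    moreover have "d j k \<le> real (max_deg n E)" using deg_le_max_deg jk by (simp add: d_def)
    ultimately show ?thesis
      unfolding T_def \<phi>_def expected_flow_eq[OF jk] K_def l_def sm_def d_def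
      using speed_ge_1 jk sm by (intro edge_gain_ge) (auto simp: sm_def)
  qed
  have "Q / 2 / K - real n / (10 * sm)
      \<le> (\<Sum>j<n. \<Sum>k<n. if E j k then (max 0 (l j - l k))\<^sup>2 else 0) / K
         - (\<Sum>j<n. \<Sum>k<n. if E j k then 1 / d j k else 0) / (10 * sm)"
    using sum_inv_max_deg_le sm unfolding Q_def l_def d_def sum_edges_pos_part_sq
    by (simp add: divide_right_mono)
  also have "\<dots> = (\<Sum>j<n. \<Sum>k<n. if E j k then (max 0 (l j - l k))\<^sup>2 / K - 1 / (10 * sm * d j k) else 0)"
    unfolding sum_divide_distrib sum_subtractf[symmetric] by (intro sum.cong refl) auto
  also have "\<dots> \<le> (\<Sum>j<n. \<Sum>k<n. if E j k then T j k else 0)"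
    using edge by (intro sum_mono) auto
  also have "\<dots> = (\<Sum>j<n. \<Sum>k<n. T j k)"
    by (intro sum.cong refl) (simp add: T_def \<phi>_def expected_flow_def)
  also have "\<dots> \<le> measure_pmf.expectation (round_step n E s w) (\<lambda>w'. Psi0 n s m w - Psi0 n s m w')"
    using expected_drop_ge_flow_gain unfolding T_def \<phi>_def l_def .
  finally show ?thesis unfolding K_def sm_def by (simp add: field_simps)
qed

end

context processor_network
begin

lemma Psi0_le_edge_sum:
  fixes w :: "nat \<Rightarrow> nat"
  assumes n2: "n \<ge> 2" and tasks: "(\<Sum>i<n. w i) = m"
  defines "Q \<equiv> \<Sum>j<n. \<Sum>k<n. if E j k then (load s w j - load s w k)\<^sup>2 else 0"
  shows "lambda2 n E / (16 * real (max_deg n E)) * (1 / (smax n s)\<^sup>2) * Psi0 n s m w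
       \<le> Q / (32 * real (max_deg n E) * smax n s)"
proof (cases "lambda2 n E > 0 \<and> max_deg n E > 0")
  case True
  define Y where "Y = (\<Sum>j<n. (load s w j - (\<Sum>i<n. load s w i) / real n)\<^sup>2)"
  have sm: "smax n s \<ge> 1" using smax_ge_1 n2 by simp
  have "Psi0 n s m w \<le> smax n s * Y"
    unfolding Y_def using n2 smax_ge tasks
    by (intro Psi0_le_smax_sum_sq_dev speed_pos Stot_pos) auto
  then have "lambda2 n E / (16 * real (max_deg n E)) * (1 / (smax n s)\<^sup>2) * Psi0 n s m w
      \<le> lambda2 n E / (16 * real (max_deg n E)) * (1 / (smax n s)\<^sup>2) * (smax n s * Y)"
    using True by (intro mult_left_mono) auto
  also have "\<dots> = 2 * lambda2 n E * Y / (32 * real (max_deg n E) * smax n s)"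
    using sm by (simp add: power2_eq_square field_simps)
  also have "\<dots> \<le> Q / (32 * real (max_deg n E) * smax n s)"
    unfolding Q_def Y_def using edge_sum_sq_ge_lambda2[OF n2] True sm
    by (intro divide_right_mono) auto
  finally show ?thesis .
next
  case False
  have "Psi0 n s m w \<ge> 0" using speed_pos by (rule Psi0_nonneg)
  moreover have "lambda2 n E / (16 * real (max_deg n E)) \<le> 0"
    using False by (cases "max_deg n E = 0") (auto intro: divide_nonpos_nonneg)
  ultimately have "lambda2 n E / (16 * real (max_deg n E)) * (1 / (smax n s)\<^sup>2) * Psi0 n s m w \<le> 0"
    by (intro mult_nonpos_nonneg) auto
  also have "0 \<le> Q / (32 * real (max_deg n E) * smax n s)"
    unfolding Q_def using smax_ge_1 n2 by (intro divide_nonneg_nonneg sum_nonneg) auto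
  finally show ?thesis .
qed

end

theorem lemma13:
  fixes n m :: nat and E :: "nat \<Rightarrow> nat \<Rightarrow> bool" and s :: "nat \<Rightarrow> real"
    and w :: "nat \<Rightarrow> nat"
  assumes n2: "n \<ge> 2"
    and sym: "\<And>i j. i < n \<Longrightarrow> j < n \<Longrightarrow> E i j \<Longrightarrow> E j i"
    and irrefl: "\<And>i. i < n \<Longrightarrow> \<not> E i i"
    and speeds: "\<And>i. i < n \<Longrightarrow> s i \<ge> 1"
    and minspeed: "\<exists>i<n. s i = 1"
    and tasks: "(\<Sum>i<n. w i) = m"
  shows "measure_pmf.expectation (round_step n E s w) (\<lambda>w'. Psi0 n s m w - Psi0 n s m w')
           \<ge> lambda2 n E / (16 * real (max_deg n E)) * (1 / (smax n s)\<^sup>2) * Psi0 n s m w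
             - real n / (4 * smax n s)"
proof -
  interpret processor_network n E s
    using sym irrefl speeds by unfold_locales auto
  have "real n / (10 * smax n s) \<le> real n / (4 * smax n s)"
    using smax_ge_1 n2 by (intro divide_left_mono) auto
  then show ?thesis
    using expected_drop_ge_edge_sum[of w m] Psi0_le_edge_sum[OF n2 tasks] n2 by simp
qed

end
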